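(* Suppose Assumptions (A1), (A2), (A5) and (A7) hold, and that $L$ is strictly convex in $v$. Let $x_0\in\mathbb{R}$, $\varpi\in\mathbb{H}_{\mathbb{F}}$, and let $(X^*,P,Z)$, with $X^*,P,Z\in\mathbb{H}_{\mathbb{F}}$, solve on $[0,T]$ $$dX_t=-H_p(X_t,P_t+\varpi_t)\,dt,\quad X_0=x_0,\qquad dP_t=H_x(X_t,P_t+\varpi_t)\,dt+Z_t\,dW_t,\quad P_T=\Psi'(X_T).$$ Define $v^*=-H_p(X^*,P+\varpi)$. Then $v^*$ attains $$\inf_{v\in\mathbb{H}_{\mathbb{F}}} \mathbb{E}\left[\int_0^T \big(L(X_t,v_t)+\varpi_t v_t\big)\,dt+\Psi(X_T)\right],\qquad X_t=x_0+\int_0^t v_s\,ds.$$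
   Context: Fix $T>0$ and a complete filtered probability space $(\Omega,\mathcal{F},\mathbb{F},\mathbb{P})$, where $\mathbb{F}$ is the standard filtration generated by a one-dimensional Brownian motion $W$. $\mathbb{H}_{\mathbb{F}}$ denotes the Hilbert space of measurable, $\mathbb{F}$-adapted processes $v:[0,T]\times\Omega\to\mathbb{R}$ with $\mathbb{E}[\int_0^T v_t^2dt]<\infty$. The Hamiltonian is $H(x,p)=\sup_{v\in\mathbb{R}}\{-pv-L(x,v)\}$. (A1) $L\in C^1(\mathbb{R}^2;[0,\infty))$ and $(x,v)\mapsto L(x,v)$ is convex. (A2) $\Psi\in C^1(\mathbb{R};[0,\infty))$ is convex. (A5) There are $\alpha>0$, $\beta\ge0$ with $\alpha|v|^2-\beta\le L(x,v)$ for all $x,v$. (A7) There is $C>0$ with $|H_p(x,p)|\le C(1+|p|)$ for all $(x,p)$. *)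

theory Defs
  imports "HOL-Probability.Probability"
begin

definition gen_sets :: "'a measure \<Rightarrow> (real \<Rightarrow> 'a \<Rightarrow> real) \<Rightarrow> real \<Rightarrow> 'a set set" where
  "gen_sets M W t = sigma_sets (space M)
     (\<Union>r\<in>{0..t}. {W r -` B \<inter> space M | B. B \<in> sets (borel :: real measure)})"

definition std_filtration :: "'a measure \<Rightarrow> (real \<Rightarrow> 'a \<Rightarrow> real) \<Rightarrow> real \<Rightarrow> 'a set set" where
  "std_filtration M W t = {A \<in> sets M. \<exists>B \<in> gen_sets M W t. (A - B) \<union> (B - A) \<in> null_sets M}"

definition brownian_motion :: "'a measure \<Rightarrow> (real \<Rightarrow> 'a \<Rightarrow> real) \<Rightarrow> bool" where
  "brownian_motion M W \<longleftrightarrow> prob_space M \<and>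
     (\<forall>t. W t \<in> borel_measurable M) \<and>
     (AE \<omega> in M. W 0 \<omega> = 0 \<and> continuous_on {0..} (\<lambda>t. W t \<omega>)) \<and>
     (\<forall>s t. 0 \<le> s \<longrightarrow> s < t \<longrightarrow>
        distributed M lborel (\<lambda>\<omega>. W t \<omega> - W s \<omega>) (\<lambda>x. ennreal (normal_density 0 (sqrt (t - s)) x)) \<and>
        prob_space.indep_set M (gen_sets M W s)
          {(\<lambda>\<omega>. W t \<omega> - W s \<omega>) -` B \<inter> space M | B. B \<in> sets (borel :: real measure)})"

definition adapted_to :: "'a measure \<Rightarrow> (real \<Rightarrow> 'a \<Rightarrow> real) \<Rightarrow> real \<Rightarrow> (real \<Rightarrow> 'a \<Rightarrow> real) \<Rightarrow> bool" where
  "adapted_to M W T v \<longleftrightarrow>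
     (\<forall>t\<in>{0..T}. \<forall>B \<in> sets (borel :: real measure). v t -` B \<inter> space M \<in> std_filtration M W t)"

definition HF :: "'a measure \<Rightarrow> (real \<Rightarrow> 'a \<Rightarrow> real) \<Rightarrow> real \<Rightarrow> (real \<Rightarrow> 'a \<Rightarrow> real) set" where
  "HF M W T = {v. (\<lambda>(t, \<omega>). v t \<omega>) \<in> borel_measurable (restrict_space lborel {0..T} \<Otimes>\<^sub>M M)
      \<and> adapted_to M W T v
      \<and> (\<integral>\<^sup>+ \<omega>. (\<integral>\<^sup>+ t. ennreal ((v t \<omega>)\<^sup>2) * indicator {0..T} t \<partial>lborel) \<partial>M) < \<infinity>}"

definition simple_ito :: "'a measure \<Rightarrow> (real \<Rightarrow> 'a \<Rightarrow> real) \<Rightarrow> real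
      \<Rightarrow> (real \<Rightarrow> 'a \<Rightarrow> real) \<Rightarrow> (real \<Rightarrow> 'a \<Rightarrow> real) \<Rightarrow> bool" where
  "simple_ito M W T S I \<longleftrightarrow>
     (\<exists>(k::nat) (tt::nat \<Rightarrow> real) (\<xi>::nat \<Rightarrow> 'a \<Rightarrow> real).
        tt 0 = 0 \<and> tt k = T \<and> (\<forall>i<k. tt i < tt (Suc i)) \<and>
        (\<forall>i<k. \<xi> i \<in> borel_measurable M \<and>
           (\<forall>B \<in> sets (borel :: real measure). \<xi> i -` B \<inter> space M \<in> std_filtration M W (tt i)) \<and>
           (\<integral>\<^sup>+ \<omega>. ennreal ((\<xi> i \<omega>)\<^sup>2) \<partial>M) < \<infinity>) \<and>
        S = (\<lambda>t \<omega>. \<Sum>i<k. \<xi> i \<omega> * indicator {tt i<..tt (Suc i)} t) \<and>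
        I = (\<lambda>t \<omega>. \<Sum>i<k. \<xi> i \<omega> * (W (min t (tt (Suc i))) \<omega> - W (min t (tt i)) \<omega>)))"

definition ito_integral :: "'a measure \<Rightarrow> (real \<Rightarrow> 'a \<Rightarrow> real) \<Rightarrow> real
      \<Rightarrow> (real \<Rightarrow> 'a \<Rightarrow> real) \<Rightarrow> (real \<Rightarrow> 'a \<Rightarrow> real) \<Rightarrow> bool" where
  "ito_integral M W T Z I \<longleftrightarrow>
     (\<exists>Sn In. (\<forall>n. simple_ito M W T (Sn n) (In n)) \<and>
        ((\<lambda>n. \<integral>\<^sup>+ \<omega>. (\<integral>\<^sup>+ t. ennreal ((Sn n t \<omega> - Z t \<omega>)\<^sup>2) * indicator {0..T} t \<partial>lborel) \<partial>M)
           \<longlonglongrightarrow> 0) \<and>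
        (\<forall>t\<in>{0..T}. (\<lambda>n. \<integral>\<^sup>+ \<omega>. ennreal ((In n t \<omega> - I t \<omega>)\<^sup>2) \<partial>M) \<longlonglongrightarrow> 0))"

definition Ham :: "(real \<Rightarrow> real \<Rightarrow> real) \<Rightarrow> real \<Rightarrow> real \<Rightarrow> real" where
  "Ham L x p = (SUP v\<in>(UNIV::real set). - p * v - L x v)"

definition Ham_p :: "(real \<Rightarrow> real \<Rightarrow> real) \<Rightarrow> real \<Rightarrow> real \<Rightarrow> real" where
  "Ham_p L x p = deriv (\<lambda>q. Ham L x q) p"

definition Ham_x :: "(real \<Rightarrow> real \<Rightarrow> real) \<Rightarrow> real \<Rightarrow> real \<Rightarrow> real" where
  "Ham_x L x p = deriv (\<lambda>y. Ham L y p) x"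

definition state :: "real \<Rightarrow> (real \<Rightarrow> 'a \<Rightarrow> real) \<Rightarrow> real \<Rightarrow> 'a \<Rightarrow> real" where
  "state x0 v t \<omega> = x0 + (LINT s:{0..t}|lborel. v s \<omega>)"

definition cost :: "'a measure \<Rightarrow> real \<Rightarrow> (real \<Rightarrow> real \<Rightarrow> real) \<Rightarrow> (real \<Rightarrow> real) \<Rightarrow> real
     \<Rightarrow> (real \<Rightarrow> 'a \<Rightarrow> real) \<Rightarrow> (real \<Rightarrow> 'a \<Rightarrow> real) \<Rightarrow> ereal" where
  "cost M T L \<Psi> x0 \<theta> v =
     enn2ereal (\<integral>\<^sup>+ \<omega>. ((\<integral>\<^sup>+ t. ennreal (L (state x0 v t \<omega>) (v t \<omega>)) * indicator {0..T} t \<partial>lborel)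
                        + ennreal (\<Psi> (state x0 v T \<omega>))) \<partial>M)
     + ereal (\<integral> \<omega>. (LINT t:{0..T}|lborel. \<theta> t \<omega> * v t \<omega>) \<partial>M)"

end

theory Submission
  imports Defs
begin

(*
  The candidate control u = -H_p(X, P + varpi) is the maximiser in the definition of the
  Hamiltonian: by strict convexity and coercivity of L it exists, is unique and depends
  continuously on (x, p), and an envelope argument gives H_p = -u and H_x = -L_x(x, u), with
  H concave in x because L is jointly convex. For an admissible control v with state Y these
  facts give, pathwise and for every t,
    L(X, u) + (P + varpi) u - H_x (Y - X) <= L(Y, v) + (P + varpi) v,
    Psi(X_T) + Psi'(X_T) (Y_T - X_T) <= Psi(Y_T).
  Integrating in time, using P_T = Psi'(X_T) and integrating P_T (Y_T - X_T) by parts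
  (Fubini for the absolutely continuous Y - X) leaves
    cost(u) + int_0^T (v_t - u_t) (M_T - M_t) dt <= cost(v)   for almost every path,
  where M is the Ito integral in the backward equation. Since v - u is adapted and square
  integrable, every term (v_t - u_t) (M_T - M_t) has expectation zero; this follows by
  approximating M with simple integrals, whose increments are independent of the past.
  Taking expectations proves optimality.
*)

section \<open>Convex duality for the Hamiltonian\<close>

lemma DERIV_continuous_subgradient:
  fixes g s :: "real \<Rightarrow> real"
  assumes subgradient: "\<And>p q. g p + s p * (q - p) \<le> g q" and cont: "isCont s p"
  shows "(g has_real_derivative s p) (at p)"
proof -
  have bound: "norm ((g q - g p) / (q - p) - s p) \<le> \<bar>s q - s p\<bar>" if "q \<noteq> p" for q
  proof -
    have "0 \<le> g q - g p - s p * (q - p)" "g q - g p - s p * (q - p) \<le> (s q - s p) * (q - p)"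
      using subgradient[of p q] subgradient[of q p] by (auto simp: algebra_simps)
    then have "\<bar>g q - g p - s p * (q - p)\<bar> \<le> \<bar>s q - s p\<bar> * \<bar>q - p\<bar>"
      by (simp add: abs_mult[symmetric])
    then show ?thesis
      using that by (simp add: abs_divide field_simps)
  qed
  have "((\<lambda>q. \<bar>s q - s p\<bar>) \<longlongrightarrow> 0) (at p)"
    using cont unfolding isCont_def by (intro tendsto_rabs_zero) (simp add: LIM_zero_iff)
  then have "((\<lambda>q. (g q - g p) / (q - p) - s p) \<longlongrightarrow> 0) (at p)"
    by (rule Lim_null_comparison[rotated])
      (use bound in \<open>auto simp: eventually_at_filter intro: always_eventually\<close>)
  then show ?thesis
    unfolding has_field_derivative_iff by (simp only: LIM_zero_iff)
qed

(* The difference quotients of g at y lie between those of phi at y and at 2x - y. *)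
lemma DERIV_concave_touching_above:
  fixes g \<phi> :: "real \<Rightarrow> real"
  assumes concave: "convex_on UNIV (\<lambda>y. - g y)" and below: "\<And>y. \<phi> y \<le> g y"
    and touch: "\<phi> x = g x" and deriv: "(\<phi> has_real_derivative D) (at x)"
  shows "(g has_real_derivative D) (at x)"
proof -
  define A where "A y = (\<phi> y - \<phi> x) / (y - x)" for y
  have A: "(A \<longlongrightarrow> D) (at x)"
    using deriv unfolding has_field_derivative_iff A_def .
  have "((\<lambda>y. 2 * x - y) \<longlongrightarrow> 2 * x - x) (at x)"
    by (intro tendsto_intros)
  then have "filterlim (\<lambda>y. 2 * x - y) (at x) (at x)"
    unfolding filterlim_at by (auto simp: eventually_at_filter intro: always_eventually)
  then have A_reflected: "((\<lambda>y. A (2 * x - y)) \<longlongrightarrow> D) (at x)"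
    by (rule filterlim_compose[OF A])
  have bound: "norm ((g y - g x) / (y - x) - D) \<le> \<bar>A y - D\<bar> + \<bar>A (2 * x - y) - D\<bar>"
    if "y \<noteq> x" for y
  proof -
    have "- g ((1 - 1/2) * y + 1/2 * (2 * x - y)) \<le> (1 - 1/2) * - g y + 1/2 * - g (2 * x - y)"
      using convex_onD[OF concave, of "1/2" y "2 * x - y"] by simp
    then have midpoint: "g y + g (2 * x - y) \<le> 2 * g x"
      by (simp add: field_simps)
    have lower: "\<phi> y - \<phi> x \<le> g y - g x" and upper: "g y - g x \<le> \<phi> x - \<phi> (2 * x - y)"
      using below[of y] below[of "2 * x - y"] touch midpoint by auto
    have reflected: "A (2 * x - y) = (\<phi> x - \<phi> (2 * x - y)) / (y - x)"
      unfolding A_def using that by (simp add: field_simps)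
    define u where "u = (\<phi> x - \<phi> (2 * x - y) - (g y - g x)) / (y - x)"
    define w where "w = (g y - g x - (\<phi> y - \<phi> x)) / (y - x)"
    have "A (2 * x - y) = (g y - g x) / (y - x) + u" "A y = (g y - g x) / (y - x) - w"
      using that reflected by (simp_all add: A_def u_def w_def diff_divide_distrib)
    moreover have "0 \<le> u * w"
      using lower upper by (simp add: u_def w_def)
    ultimately show ?thesis
      by (cases "0 \<le> u") (auto simp: abs_le_iff zero_le_mult_iff)
  qed
  have "((\<lambda>y. \<bar>A y - D\<bar> + \<bar>A (2 * x - y) - D\<bar>) \<longlongrightarrow> \<bar>D - D\<bar> + \<bar>D - D\<bar>) (at x)"
    by (intro tendsto_intros A A_reflected)
  then have "((\<lambda>y. \<bar>A y - D\<bar> + \<bar>A (2 * x - y) - D\<bar>) \<longlongrightarrow> 0) (at x)"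
    by simp
  then have "((\<lambda>y. (g y - g x) / (y - x) - D) \<longlongrightarrow> 0) (at x)"
    by (rule Lim_null_comparison[rotated])
      (use bound in \<open>auto simp: eventually_at_filter intro: always_eventually\<close>)
  then show ?thesis
    unfolding has_field_derivative_iff by (simp only: LIM_zero_iff)
qed

locale lagrangian =
  fixes L :: "real \<Rightarrow> real \<Rightarrow> real" and L' :: "real \<times> real \<Rightarrow> (real \<times> real) \<Rightarrow>\<^sub>L real"
    and \<alpha> \<beta> :: real
  assumes L_has_derivative: "\<And>z. ((\<lambda>z. L (fst z) (snd z)) has_derivative blinfun_apply (L' z)) (at z)"
    and continuous_L': "continuous_on UNIV L'"
    and L_nonneg: "\<And>x v. L x v \<ge> 0"
    and L_convex: "convex_on UNIV (\<lambda>z. L (fst z) (snd z))"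
    and \<alpha>_pos: "\<alpha> > 0" and \<beta>_nonneg: "\<beta> \<ge> 0" and L_coercive: "\<And>x v. \<alpha> * v\<^sup>2 - \<beta> \<le> L x v"
    and L_strictly_convex: "\<And>x u w t. u \<noteq> w \<Longrightarrow> 0 < t \<Longrightarrow> t < 1 \<Longrightarrow>
                   L x (t * u + (1 - t) * w) < t * L x u + (1 - t) * L x w"
begin

definition Ham_obj :: "real \<Rightarrow> real \<Rightarrow> real \<Rightarrow> real" where
  "Ham_obj x p v = - p * v - L x v"

lemma Ham_eq_SUP_Ham_obj: "Ham L x p = (SUP v. Ham_obj x p v)"
  by (simp add: Ham_def Ham_obj_def)

lemma continuous_on_L: "continuous_on UNIV (\<lambda>z. L (fst z) (snd z))"
  by (rule continuous_at_imp_continuous_on) (use L_has_derivative has_derivative_continuous in blast)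

lemma continuous_on_Ham_obj: "continuous_on UNIV (\<lambda>z. Ham_obj (fst z) (fst (snd z)) (snd (snd z)))"
  unfolding Ham_obj_def
  by (intro continuous_intros continuous_on_compose2[OF continuous_on_L, of _ "\<lambda>z. (fst z, snd (snd z))", simplified])

lemma Ham_obj_concave:
  assumes "t \<in> {0..1}"
  shows "t * Ham_obj x p u + (1 - t) * Ham_obj x p w \<le> Ham_obj x p (t * u + (1 - t) * w)"
proof (cases "u = w \<or> t = 0 \<or> t = 1")
  case True
  then show ?thesis by (auto simp: algebra_simps)
next
  case False
  then have "L x (t * u + (1 - t) * w) < t * L x u + (1 - t) * L x w"
    using assms by (intro L_strictly_convex) auto
  then show ?thesis unfolding Ham_obj_def by (simp add: algebra_simps)
qed

lemma Ham_obj_less_far: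
  assumes "\<bar>w\<bar> \<ge> 1" "\<bar>w\<bar> > (\<bar>p\<bar> + \<beta> + c) / \<alpha>" "c \<ge> 0"
  shows "Ham_obj x p w < - c"
proof -
  have "\<bar>p\<bar> + \<beta> + c < \<alpha> * \<bar>w\<bar>" using assms \<alpha>_pos by (simp add: field_simps)
  then have "(\<bar>p\<bar> + \<beta> + c) * \<bar>w\<bar> < \<alpha> * \<bar>w\<bar> * \<bar>w\<bar>"
    using assms by (intro mult_strict_right_mono) auto
  moreover have "\<beta> + c \<le> (\<beta> + c) * \<bar>w\<bar>" using assms \<beta>_nonneg by (simp add: mult_le_cancel_left1)
  moreover have "- p * w \<le> \<bar>p\<bar> * \<bar>w\<bar>" by (metis abs_ge_self abs_minus abs_mult minus_mult_left)
  moreover have "\<alpha> * \<bar>w\<bar> * \<bar>w\<bar> = \<alpha> * w\<^sup>2" by (simp add: power2_eq_square abs_mult_self)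
  ultimately have "- p * w - \<alpha> * w\<^sup>2 + \<beta> < - c" by (simp add: algebra_simps power2_eq_square)
  then show ?thesis using L_coercive[of w x] unfolding Ham_obj_def by linarith
qed

lemma Ham_obj_has_max: "\<exists>v. \<forall>w. Ham_obj x p w \<le> Ham_obj x p v"
proof -
  define R where "R = max 1 ((\<bar>p\<bar> + \<beta> + L x 0) / \<alpha>)"
  have "continuous_on (cball 0 R) (Ham_obj x p)"
    unfolding Ham_obj_def
    by (intro continuous_intros continuous_on_compose2[OF continuous_on_L, of _ "\<lambda>v. (x, v)", simplified])
  then obtain v where v: "\<And>w. w \<in> cball 0 R \<Longrightarrow> Ham_obj x p w \<le> Ham_obj x p v"
    using continuous_attains_sup[of "cball 0 R" "Ham_obj x p"] R_def by fastforce
  have "Ham_obj x p 0 \<le> Ham_obj x p v" using v R_def by simp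
  moreover have "Ham_obj x p w < Ham_obj x p 0" if "w \<notin> cball 0 R" for w
    using that Ham_obj_less_far[of w p "L x 0" x] L_nonneg[of x 0]
    by (simp add: R_def Ham_obj_def)
  ultimately have "Ham_obj x p w \<le> Ham_obj x p v" if "w \<notin> cball 0 R" for w
    using that by force
  with v show ?thesis by blast
qed

definition opt_ctrl :: "real \<Rightarrow> real \<Rightarrow> real" where
  "opt_ctrl x p = (SOME v. \<forall>w. Ham_obj x p w \<le> Ham_obj x p v)"

lemma Ham_obj_le_opt_ctrl: "Ham_obj x p w \<le> Ham_obj x p (opt_ctrl x p)"
  using someI_ex[OF Ham_obj_has_max[of x p]] unfolding opt_ctrl_def by blast

lemma opt_ctrl_unique:
  assumes "\<forall>w. Ham_obj x p w \<le> Ham_obj x p v"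
  shows "v = opt_ctrl x p"
proof (rule ccontr)
  assume "v \<noteq> opt_ctrl x p"
  then have "L x ((1/2) * v + (1 - 1/2) * opt_ctrl x p) < (1/2) * L x v + (1 - 1/2) * L x (opt_ctrl x p)"
    by (intro L_strictly_convex) auto
  then have "(Ham_obj x p v + Ham_obj x p (opt_ctrl x p)) / 2 < Ham_obj x p ((1/2) * v + (1 - 1/2) * opt_ctrl x p)"
    unfolding Ham_obj_def by (simp add: field_simps)
  moreover have "Ham_obj x p ((1/2) * v + (1 - 1/2) * opt_ctrl x p) \<le> Ham_obj x p v"
    and "Ham_obj x p (opt_ctrl x p) \<le> Ham_obj x p v"
    using assms by blast+
  ultimately show False
    using Ham_obj_le_opt_ctrl[of x p v] by argo
qed

lemma Ham_eq_opt_ctrl: "Ham L x p = Ham_obj x p (opt_ctrl x p)"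
  unfolding Ham_eq_SUP_Ham_obj by (rule cSup_eq_maximum) (auto intro: Ham_obj_le_opt_ctrl)

lemma Ham_obj_le_Ham: "Ham_obj x p v \<le> Ham L x p"
  using Ham_eq_opt_ctrl Ham_obj_le_opt_ctrl by simp

lemma abs_opt_ctrl_le: "\<bar>opt_ctrl x p\<bar> \<le> max 1 ((\<bar>p\<bar> + \<beta> + L x 0) / \<alpha>)"
proof (rule ccontr)
  assume "\<not> ?thesis"
  then have "Ham_obj x p (opt_ctrl x p) < - L x 0"
    by (intro Ham_obj_less_far) (auto simp: L_nonneg)
  then show False using Ham_obj_le_opt_ctrl[of x p 0] by (simp add: Ham_obj_def)
qed

lemma Ham_obj_gap:
  assumes "\<epsilon> > 0"
  obtains g where "g > 0"
    "\<And>w. \<epsilon> \<le> \<bar>w - opt_ctrl x p\<bar> \<Longrightarrow> Ham_obj x p w + g \<le> Ham_obj x p (opt_ctrl x p)"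
proof -
  define v0 where "v0 = opt_ctrl x p"
  have strict: "Ham_obj x p (v0 + e) < Ham_obj x p v0" if "e \<noteq> 0" for e
  proof (rule ccontr)
    assume "\<not> ?thesis"
    then have "\<forall>w. Ham_obj x p w \<le> Ham_obj x p (v0 + e)"
      using Ham_obj_le_opt_ctrl unfolding v0_def by (meson not_less order_trans)
    then show False using opt_ctrl_unique that unfolding v0_def by fastforce
  qed
  define g where "g = Ham_obj x p v0 - max (Ham_obj x p (v0 + \<epsilon>)) (Ham_obj x p (v0 - \<epsilon>))"
  have "g > 0"
    using strict[of \<epsilon>] strict[of "- \<epsilon>"] assms by (simp add: g_def)
  moreover have "Ham_obj x p w + g \<le> Ham_obj x p v0" if far: "\<epsilon> \<le> \<bar>w - v0\<bar>" for w
  proof -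
    define t where "t = \<epsilon> / \<bar>w - v0\<bar>"
    have t: "t \<in> {0..1}" using far assms by (auto simp: t_def)
    have "t * (w - v0) = sgn (w - v0) * \<epsilon>"
      using far assms by (auto simp: t_def sgn_if field_simps)
    then have "t * w + (1 - t) * v0 = v0 + sgn (w - v0) * \<epsilon>"
      by (simp add: algebra_simps)
    then have "t * Ham_obj x p w + (1 - t) * Ham_obj x p v0 \<le> Ham_obj x p (v0 + sgn (w - v0) * \<epsilon>)"
      using Ham_obj_concave[OF t, of x p w v0] by simp
    moreover have "t * Ham_obj x p w + (1 - t) * Ham_obj x p w \<le> t * Ham_obj x p w + (1 - t) * Ham_obj x p v0"
      using t Ham_obj_le_opt_ctrl[of x p w] unfolding v0_def by (intro add_left_mono mult_left_mono) auto
    moreover have "Ham_obj x p (v0 + sgn (w - v0) * \<epsilon>) \<le> max (Ham_obj x p (v0 + \<epsilon>)) (Ham_obj x p (v0 - \<epsilon>))"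
      using far assms by (auto simp: sgn_if)
    ultimately show ?thesis unfolding g_def by (simp add: algebra_simps)
  qed
  ultimately show ?thesis using that unfolding v0_def by blast
qed

lemma opt_ctrl_locally_bounded:
  obtains R where "R \<ge> 1" "\<And>y q. dist y x \<le> 1 \<Longrightarrow> dist q p \<le> 1 \<Longrightarrow> \<bar>opt_ctrl y q\<bar> \<le> R"
proof -
  have "continuous_on (cball x 1) (\<lambda>y. L y 0)"
    by (intro continuous_on_compose2[OF continuous_on_L, of _ "\<lambda>y. (y, 0)", simplified] continuous_intros)
  then obtain ys where ys: "\<And>y. y \<in> cball x 1 \<Longrightarrow> L y 0 \<le> L ys 0"
    using continuous_attains_sup[of "cball x 1" "\<lambda>y. L y 0"] by fastforce
  define R where "R = max 1 ((\<bar>p\<bar> + 1 + \<beta> + L ys 0) / \<alpha>)"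
  have "\<bar>opt_ctrl y q\<bar> \<le> R" if "dist y x \<le> 1" "dist q p \<le> 1" for y q
  proof -
    have "L y 0 \<le> L ys 0" using that ys by (simp add: dist_commute)
    moreover have "\<bar>q\<bar> \<le> \<bar>p\<bar> + 1" using that by (simp add: dist_real_def)
    ultimately have "(\<bar>q\<bar> + \<beta> + L y 0) / \<alpha> \<le> (\<bar>p\<bar> + 1 + \<beta> + L ys 0) / \<alpha>"
      using \<alpha>_pos by (intro divide_right_mono) auto
    then show ?thesis using abs_opt_ctrl_le[of y q] unfolding R_def by linarith
  qed
  then show ?thesis using that[of R] by (simp add: R_def)
qed

lemma Ham_obj_locally_uniformly_continuous:
  assumes "e > 0"
  obtains d where "d > 0"
    "\<And>y q v. dist y x < d \<Longrightarrow> dist q p < d \<Longrightarrow> \<bar>v\<bar> \<le> R \<Longrightarrow> \<bar>Ham_obj y q v - Ham_obj x p v\<bar> < e"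
proof -
  define K where "K = cball x 1 \<times> cball p 1 \<times> cball (0::real) R"
  have "compact K" unfolding K_def by (intro compact_Times) auto
  then have "uniformly_continuous_on K (\<lambda>z. Ham_obj (fst z) (fst (snd z)) (snd (snd z)))"
    by (intro compact_uniformly_continuous continuous_on_subset[OF continuous_on_Ham_obj]) auto
  then obtain d1 where d1: "d1 > 0" "\<And>z z'. z \<in> K \<Longrightarrow> z' \<in> K \<Longrightarrow> dist z' z < d1 \<Longrightarrow>
      dist (Ham_obj (fst z') (fst (snd z')) (snd (snd z'))) (Ham_obj (fst z) (fst (snd z)) (snd (snd z))) < e"
    unfolding uniformly_continuous_on_def using assms by metis
  have "\<bar>Ham_obj y q v - Ham_obj x p v\<bar> < e"
    if "dist y x < min 1 (d1 / 2)" "dist q p < min 1 (d1 / 2)" "\<bar>v\<bar> \<le> R" for y q v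
  proof -
    have "(x, p, v) \<in> K" "(y, q, v) \<in> K"
      using that by (auto simp: K_def dist_commute)
    moreover have "dist (y, q, v) (x, p, v) \<le> dist y x + dist q p"
      using sqrt_sum_squares_le_sum_abs[of "dist y x" "dist q p"] by (simp add: dist_Pair_Pair)
    ultimately show ?thesis
      using that d1(2)[of "(x, p, v)" "(y, q, v)"] by (simp add: dist_real_def)
  qed
  then show ?thesis using that[of "min 1 (d1 / 2)"] d1(1) by simp
qed

lemma isCont_opt_ctrl: "isCont (\<lambda>z. opt_ctrl (fst z) (snd z)) (x, p)"
  unfolding continuous_at_eps_delta
proof (intro allI impI)
  fix \<epsilon> :: real assume "\<epsilon> > 0"
  then obtain g where g: "g > 0"
    "\<And>w. \<epsilon> \<le> \<bar>w - opt_ctrl x p\<bar> \<Longrightarrow> Ham_obj x p w + g \<le> Ham_obj x p (opt_ctrl x p)"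
    using Ham_obj_gap[OF \<open>\<epsilon> > 0\<close>, of x p] by blast
  obtain R where R: "\<And>y q. dist y x \<le> 1 \<Longrightarrow> dist q p \<le> 1 \<Longrightarrow> \<bar>opt_ctrl y q\<bar> \<le> R"
    using opt_ctrl_locally_bounded[of x p] by blast
  obtain d where d: "d > 0"
    "\<And>y q v. dist y x < d \<Longrightarrow> dist q p < d \<Longrightarrow> \<bar>v\<bar> \<le> R \<Longrightarrow> \<bar>Ham_obj y q v - Ham_obj x p v\<bar> < g / 2"
    using Ham_obj_locally_uniformly_continuous[of "g / 2" x p R] g(1) by auto
  have "\<bar>opt_ctrl y q - opt_ctrl x p\<bar> < \<epsilon>" if "dist (y, q) (x, p) < min 1 d" for y q
  proof -
    have near: "dist y x < min 1 d" "dist q p < min 1 d"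
      using that dist_fst_le[of "(y, q)" "(x, p)"] dist_snd_le[of "(y, q)" "(x, p)"] by auto
    define v0 v1 where "v0 = opt_ctrl x p" and "v1 = opt_ctrl y q"
    have "\<bar>v0\<bar> \<le> R" "\<bar>v1\<bar> \<le> R" unfolding v0_def v1_def using near by (auto intro: R)
    then have "\<bar>Ham_obj y q v0 - Ham_obj x p v0\<bar> < g / 2" "\<bar>Ham_obj y q v1 - Ham_obj x p v1\<bar> < g / 2"
      using d(2) near by auto
    then have "Ham_obj x p v0 - g / 2 < Ham_obj y q v0" "Ham_obj y q v1 < Ham_obj x p v1 + g / 2"
      unfolding abs_less_iff by linarith+
    moreover have "Ham_obj y q v0 \<le> Ham_obj y q v1" unfolding v1_def by (rule Ham_obj_le_opt_ctrl)
    ultimately have "\<not> \<epsilon> \<le> \<bar>v1 - v0\<bar>" using g(2)[of v1] unfolding v0_def by force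
    then show ?thesis unfolding v0_def v1_def by simp
  qed
  then show "\<exists>d>0. \<forall>z. dist z (x, p) < d \<longrightarrow> dist (opt_ctrl (fst z) (snd z)) (opt_ctrl (fst (x, p)) (snd (x, p))) < \<epsilon>"
    using d(1) by (intro exI[of _ "min 1 d"]) (auto simp: dist_real_def)
qed

lemma continuous_on_opt_ctrl: "continuous_on UNIV (\<lambda>z. opt_ctrl (fst z) (snd z))"
  using isCont_opt_ctrl by (intro continuous_at_imp_continuous_on) (metis prod.collapse)

lemma Ham_has_derivative_p: "((\<lambda>q. Ham L x q) has_real_derivative - opt_ctrl x p) (at p)"
proof (rule DERIV_continuous_subgradient[where s = "\<lambda>q. - opt_ctrl x q"])
  show "Ham L x p' + - opt_ctrl x p' * (q - p') \<le> Ham L x q" for p' q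
    using Ham_obj_le_Ham[of x q "opt_ctrl x p'"] Ham_eq_opt_ctrl[of x p']
    by (simp add: Ham_obj_def algebra_simps)
  have "isCont (\<lambda>q. (x, q)) p" by (intro continuous_intros)
  from isCont_o2[OF this isCont_opt_ctrl] show "isCont (\<lambda>q. - opt_ctrl x q) p"
    by (intro continuous_intros) simp
qed

lemma Ham_p_eq: "Ham_p L x p = - opt_ctrl x p"
  unfolding Ham_p_def using Ham_has_derivative_p by (rule DERIV_imp_deriv)

definition L_x :: "real \<Rightarrow> real \<Rightarrow> real" where
  "L_x x v = blinfun_apply (L' (x, v)) (1, 0)"

lemma L_x_has_derivative: "((\<lambda>y. L y v) has_real_derivative L_x x v) (at x)"
proof -
  have "((\<lambda>y. L (fst (y, v)) (snd (y, v))) has_derivative (\<lambda>h. blinfun_apply (L' (x, v)) (h, 0))) (at x)"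
    by (rule has_derivative_compose[OF _ L_has_derivative])
      (intro has_derivative_Pair has_derivative_ident has_derivative_const)
  moreover have "blinfun_apply (L' (x, v)) (h, 0) = L_x x v * h" for h
    using blinfun.scaleR_right[of "L' (x, v)" h "(1, 0)"] by (simp add: L_x_def)
  ultimately show ?thesis by (simp add: has_field_derivative_def mult.commute[of _ "L_x x v"])
qed

lemma continuous_on_L_x: "continuous_on UNIV (\<lambda>z. L_x (fst z) (snd z))"
  unfolding L_x_def
  by (intro blinfun.continuous_on continuous_on_compose2[OF continuous_L'] continuous_intros) auto

lemma concave_Ham_x: "convex_on UNIV (\<lambda>y. - Ham L y p)"
proof (rule convex_onI)
  fix t a b :: real assume t: "0 < t" "t < 1"
  define va vb where "va = opt_ctrl a p" and "vb = opt_ctrl b p"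
  have "L ((1 - t) * a + t * b) ((1 - t) * va + t * vb) \<le> (1 - t) * L a va + t * L b vb"
    using convex_onD[OF L_convex, of t "(a, va)" "(b, vb)"] t by simp
  then have "(1 - t) * Ham_obj a p va + t * Ham_obj b p vb \<le> Ham_obj ((1 - t) * a + t * b) p ((1 - t) * va + t * vb)"
    unfolding Ham_obj_def by (simp add: algebra_simps)
  also have "\<dots> \<le> Ham L ((1 - t) * a + t * b) p"
    by (rule Ham_obj_le_Ham)
  finally show "- Ham L ((1 - t) *\<^sub>R a + t *\<^sub>R b) p \<le> (1 - t) * - Ham L a p + t * - Ham L b p"
    using Ham_eq_opt_ctrl[of a p] Ham_eq_opt_ctrl[of b p] by (simp add: va_def vb_def)
qed simp

lemma Ham_has_derivative_x: "((\<lambda>y. Ham L y p) has_real_derivative - L_x x (opt_ctrl x p)) (at x)"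
proof (rule DERIV_concave_touching_above[OF concave_Ham_x])
  show "Ham_obj y p (opt_ctrl x p) \<le> Ham L y p" for y
    by (rule Ham_obj_le_Ham)
  show "Ham_obj x p (opt_ctrl x p) = Ham L x p"
    by (rule Ham_eq_opt_ctrl[symmetric])
  show "((\<lambda>y. Ham_obj y p (opt_ctrl x p)) has_real_derivative - L_x x (opt_ctrl x p)) (at x)"
    unfolding Ham_obj_def by (auto intro!: derivative_eq_intros L_x_has_derivative)
qed

lemma Ham_x_eq: "Ham_x L x p = - L_x x (opt_ctrl x p)"
  unfolding Ham_x_def using Ham_has_derivative_x by (rule DERIV_imp_deriv)

lemma Ham_le_tangent_x: "Ham L y p \<le> Ham L x p + Ham_x L x p * (y - x)"
proof -
  have "((\<lambda>y. - Ham L y p) has_real_derivative - Ham_x L x p) (at x within UNIV)"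
    unfolding Ham_x_eq by (intro DERIV_minus Ham_has_derivative_x)
  from convex_on_imp_above_tangent[OF concave_Ham_x _ _ _ this, of y] show ?thesis
    by simp
qed

lemma L_ge_tangent: "L x (opt_ctrl x p) + p * opt_ctrl x p - Ham_x L x p * (y - x) \<le> L y v + p * v"
  using Ham_obj_le_Ham[of y p v] Ham_le_tangent_x[of y p x] Ham_eq_opt_ctrl[of x p]
  by (simp add: Ham_obj_def)

lemma continuous_on_Ham_x: "continuous_on UNIV (\<lambda>z. Ham_x L (fst z) (snd z))"
  unfolding Ham_x_eq
  by (intro continuous_intros continuous_on_compose2[OF continuous_on_L_x, of _ "\<lambda>z. (fst z, opt_ctrl (fst z) (snd z))", simplified] continuous_on_opt_ctrl)

lemma measurable_L [measurable]: "(\<lambda>(x, v). L x v) \<in> borel_measurable (borel \<Otimes>\<^sub>M borel)"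
  using borel_measurable_continuous_onI[OF continuous_on_L] by (simp add: borel_prod split_beta')

lemma measurable_Ham_x [measurable]: "(\<lambda>(x, p). Ham_x L x p) \<in> borel_measurable (borel \<Otimes>\<^sub>M borel)"
  using borel_measurable_continuous_onI[OF continuous_on_Ham_x] by (simp add: borel_prod split_beta')

end

section \<open>Square-integrable functions and extended-real integrals\<close>

lemma integrable_mult_square_integrable:
  fixes f g :: "'a \<Rightarrow> real"
  assumes "f \<in> borel_measurable M" "g \<in> borel_measurable M"
    "integrable M (\<lambda>x. (f x)\<^sup>2)" "integrable M (\<lambda>x. (g x)\<^sup>2)"
  shows "integrable M (\<lambda>x. f x * g x)"
proof (rule Bochner_Integration.integrable_bound[of _ "\<lambda>x. (f x)\<^sup>2 + (g x)\<^sup>2"])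
  show "integrable M (\<lambda>x. (f x)\<^sup>2 + (g x)\<^sup>2)" using assms by auto
  show "(\<lambda>x. f x * g x) \<in> borel_measurable M" using assms by auto
  have "\<bar>f x\<bar> * \<bar>g x\<bar> \<le> (f x)\<^sup>2 + (g x)\<^sup>2" for x
  proof -
    have "2 * \<bar>f x\<bar> * \<bar>g x\<bar> \<le> (f x)\<^sup>2 + (g x)\<^sup>2"
      using sum_squares_bound[of "\<bar>f x\<bar>" "\<bar>g x\<bar>"] by simp
    moreover have "0 \<le> \<bar>f x\<bar> * \<bar>g x\<bar>" by simp
    ultimately show ?thesis by linarith
  qed
  then show "AE x in M. norm (f x * g x) \<le> norm ((f x)\<^sup>2 + (g x)\<^sup>2)"
    by (simp add: abs_mult)
qed

lemma integrable_square_diff: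
  fixes f g :: "'a \<Rightarrow> real"
  assumes "f \<in> borel_measurable M" "g \<in> borel_measurable M"
    "integrable M (\<lambda>x. (f x)\<^sup>2)" "integrable M (\<lambda>x. (g x)\<^sup>2)"
  shows "integrable M (\<lambda>x. (f x - g x)\<^sup>2)"
proof -
  have "integrable M (\<lambda>x. (f x)\<^sup>2 - 2 * (f x * g x) + (g x)\<^sup>2)"
    using assms integrable_mult_square_integrable[OF assms] by auto
  then show ?thesis
    by (simp add: power2_diff algebra_simps)
qed

lemma ennreal_square_le: "ennreal (a\<^sup>2) \<le> 2 * ennreal ((a - b)\<^sup>2) + 2 * ennreal ((b::real)\<^sup>2)"
proof -
  have "0 \<le> (a - 2 * b)\<^sup>2" by simp
  then have "a\<^sup>2 \<le> 2 * (a - b)\<^sup>2 + 2 * b\<^sup>2"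
    by (simp add: power2_eq_square algebra_simps)
  then have "ennreal (a\<^sup>2) \<le> ennreal (2 * (a - b)\<^sup>2 + 2 * b\<^sup>2)"
    by (rule ennreal_leI)
  then show ?thesis
    by (simp add: ennreal_plus ennreal_mult)
qed

lemma set_integrable_of_square:
  fixes f :: "'a \<Rightarrow> real"
  assumes f: "set_borel_measurable M S f" and sq: "set_integrable M S (\<lambda>x. (f x)\<^sup>2)"
    and S: "S \<in> sets M" "emeasure M S < \<infinity>"
  shows "set_integrable M S f"
proof (rule set_integrable_bound[OF _ f])
  have "integrable M (indicator S :: 'a \<Rightarrow> real)"
    using S by (rule integrable_real_indicator)
  then show "set_integrable M S (\<lambda>x. 1 + (f x)\<^sup>2)"
    using sq by (intro set_integral_add) (auto simp: set_integrable_def)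
  have "\<bar>f x\<bar> \<le> 1 + (f x)\<^sup>2" for x
  proof (cases "\<bar>f x\<bar> \<le> 1")
    case False
    then have "\<bar>f x\<bar> * 1 \<le> \<bar>f x\<bar> * \<bar>f x\<bar>"
      by (intro mult_left_mono) auto
    then show ?thesis
      by (simp add: power2_eq_square abs_mult_self)
  qed (simp add: add_increasing2)
  then show "AE x in M. x \<in> S \<longrightarrow> norm (f x) \<le> norm (1 + (f x)\<^sup>2)"
    by simp
qed

lemma set_integrable_mult_of_squares:
  fixes f g :: "'a \<Rightarrow> real"
  assumes "set_borel_measurable M S f" "set_borel_measurable M S g"
    "set_integrable M S (\<lambda>x. (f x)\<^sup>2)" "set_integrable M S (\<lambda>x. (g x)\<^sup>2)"
  shows "set_integrable M S (\<lambda>x. f x * g x)"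
proof -
  have square: "(indicator S x * h x)\<^sup>2 = indicator S x * (h x)\<^sup>2" for h :: "'a \<Rightarrow> real" and x
    by (simp add: indicator_def)
  have "integrable M (\<lambda>x. (indicator S x * f x) * (indicator S x * g x))"
    using assms unfolding set_borel_measurable_def set_integrable_def
    by (intro integrable_mult_square_integrable) (simp_all only: square real_scaleR_def)
  moreover have "(indicator S x * f x) * (indicator S x * g x) = indicator S x *\<^sub>R (f x * g x)" for x
    by (simp add: indicator_def)
  ultimately show ?thesis
    unfolding set_integrable_def by simp
qed

lemma enn2ereal_plus_ereal_le_iff:
  assumes "0 \<le> p" "0 \<le> q"
  shows "enn2ereal a + ereal (p - q) \<le> enn2ereal b \<longleftrightarrow> a + ennreal p \<le> b + ennreal q"
proof (cases a rule: ennreal_cases)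
  case (real x)
  show ?thesis
  proof (cases b rule: ennreal_cases)
    case (real y)
    then show ?thesis
      using \<open>a = ennreal x\<close> \<open>0 \<le> x\<close> assms
      by (simp add: ennreal_plus[symmetric] del: ennreal_plus) (simp add: algebra_simps)
  qed (simp add: top_add)
next
  case top
  then show ?thesis
    by (cases b rule: ennreal_cases) (simp_all add: top_unique ennreal_plus[symmetric] del: ennreal_plus)
qed

lemma enn2ereal_plus_ereal_le_add:
  assumes "enn2ereal a + ereal c \<le> enn2ereal b" "x + d \<le> y" "0 \<le> x" "0 \<le> y"
  shows "enn2ereal (a + ennreal x) + ereal (c + d) \<le> enn2ereal (b + ennreal y)"
proof -
  have "enn2ereal (a + ennreal x) + ereal (c + d) = (enn2ereal a + ereal c) + ereal (x + d)"
    using assms(3) by (simp add: plus_ennreal.rep_eq ac_simps)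
  also have "\<dots> \<le> enn2ereal b + ereal y"
    using assms(1,2) by (intro add_mono) auto
  also have "\<dots> = enn2ereal (b + ennreal y)"
    using assms(4) by (simp add: plus_ennreal.rep_eq)
  finally show ?thesis .
qed

lemma nn_integral_plus_integral_le:
  fixes f f' :: "'a \<Rightarrow> ennreal" and c :: "'a \<Rightarrow> real"
  assumes [measurable]: "f \<in> borel_measurable M" "f' \<in> borel_measurable M"
    and c: "integrable M c"
    and le: "AE x in M. enn2ereal (f x) + ereal (c x) \<le> enn2ereal (f' x)"
  shows "enn2ereal (\<integral>\<^sup>+x. f x \<partial>M) + ereal (\<integral>x. c x \<partial>M) \<le> enn2ereal (\<integral>\<^sup>+x. f' x \<partial>M)"
proof -
  define cp cn where "cp = (\<lambda>x. max 0 (c x))" and "cn = (\<lambda>x. max 0 (- c x))"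
  have int: "integrable M cp" "integrable M cn"
    using c by (auto simp: cp_def cn_def)
  have "AE x in M. f x + ennreal (cp x) \<le> f' x + ennreal (cn x)"
    using le
  proof eventually_elim
    case (elim x)
    have "cp x - cn x = c x"
      by (auto simp: cp_def cn_def max_def)
    then show ?case
      using elim enn2ereal_plus_ereal_le_iff[of "cp x" "cn x" "f x" "f' x"] by (simp add: cp_def cn_def)
  qed
  then have "(\<integral>\<^sup>+x. f x + ennreal (cp x) \<partial>M) \<le> (\<integral>\<^sup>+x. f' x + ennreal (cn x) \<partial>M)"
    by (rule nn_integral_mono_AE)
  moreover have "(\<integral>\<^sup>+x. f x + ennreal (cp x) \<partial>M) = (\<integral>\<^sup>+x. f x \<partial>M) + ennreal (\<integral>x. cp x \<partial>M)"
    "(\<integral>\<^sup>+x. f' x + ennreal (cn x) \<partial>M) = (\<integral>\<^sup>+x. f' x \<partial>M) + ennreal (\<integral>x. cn x \<partial>M)"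
  proof -
    have [measurable]: "cp \<in> borel_measurable M" "cn \<in> borel_measurable M"
      using int by auto
    have "(\<integral>\<^sup>+x. ennreal (cp x) \<partial>M) = ennreal (\<integral>x. cp x \<partial>M)"
      "(\<integral>\<^sup>+x. ennreal (cn x) \<partial>M) = ennreal (\<integral>x. cn x \<partial>M)"
      using int by (intro nn_integral_eq_integral; simp add: cp_def cn_def)+
    moreover have "(\<integral>\<^sup>+x. f x + ennreal (cp x) \<partial>M) = (\<integral>\<^sup>+x. f x \<partial>M) + (\<integral>\<^sup>+x. ennreal (cp x) \<partial>M)"
      "(\<integral>\<^sup>+x. f' x + ennreal (cn x) \<partial>M) = (\<integral>\<^sup>+x. f' x \<partial>M) + (\<integral>\<^sup>+x. ennreal (cn x) \<partial>M)"
      by (rule nn_integral_add; measurable)+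
    ultimately show "(\<integral>\<^sup>+x. f x + ennreal (cp x) \<partial>M) = (\<integral>\<^sup>+x. f x \<partial>M) + ennreal (\<integral>x. cp x \<partial>M)"
      "(\<integral>\<^sup>+x. f' x + ennreal (cn x) \<partial>M) = (\<integral>\<^sup>+x. f' x \<partial>M) + ennreal (\<integral>x. cn x \<partial>M)"
      by simp_all
  qed
  ultimately have "(\<integral>\<^sup>+x. f x \<partial>M) + ennreal (\<integral>x. cp x \<partial>M) \<le> (\<integral>\<^sup>+x. f' x \<partial>M) + ennreal (\<integral>x. cn x \<partial>M)"
    by simp
  moreover have "c = (\<lambda>x. cp x - cn x)"
    by (auto simp: cp_def cn_def max_def)
  then have "(\<integral>x. c x \<partial>M) = (\<integral>x. cp x \<partial>M) - (\<integral>x. cn x \<partial>M)"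
    using int by simp
  moreover have "0 \<le> (\<integral>x. cp x \<partial>M)" "0 \<le> (\<integral>x. cn x \<partial>M)"
    unfolding cp_def cn_def by (auto intro!: integral_nonneg_AE)
  ultimately show ?thesis
    using enn2ereal_plus_ereal_le_iff by metis
qed

lemma set_nn_integral_plus_set_integral_le:
  fixes f f' g :: "'a \<Rightarrow> real"
  assumes [measurable]: "f \<in> borel_measurable M" "f' \<in> borel_measurable M" "S \<in> sets M"
    and g: "set_integrable M S g"
    and le: "\<And>x. x \<in> S \<Longrightarrow> f x + g x \<le> f' x" and nonneg: "\<And>x. 0 \<le> f x"
  shows "enn2ereal (\<integral>\<^sup>+x. ennreal (f x) * indicator S x \<partial>M) + ereal (LINT x:S|M. g x)
    \<le> enn2ereal (\<integral>\<^sup>+x. ennreal (f' x) * indicator S x \<partial>M)"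
proof -
  have "ereal (f x + g x) \<le> enn2ereal (ennreal (f' x))" if "x \<in> S" for x
    using le[OF that] by (cases "0 \<le> f' x") (auto simp: ennreal_neg zero_ennreal.rep_eq)
  then show ?thesis
    unfolding set_lebesgue_integral_def using g nonneg
    by (intro nn_integral_plus_integral_le AE_I2) (auto simp: set_integrable_def indicator_def)
qed

lemma ereal_add_diff_le:
  fixes a b :: ereal
  assumes "a + ereal (x - y) \<le> b"
  shows "a + ereal x \<le> b + ereal y"
proof -
  have "a + ereal x = (a + ereal (x - y)) + ereal y"
    by (simp add: add.assoc)
  also have "\<dots> \<le> b + ereal y"
    using assms by (rule add_right_mono)
  finally show ?thesis .
qed

lemma integral_mult_eq_0_L2_limit:
  fixes Y X :: "'a \<Rightarrow> real" and X' :: "nat \<Rightarrow> 'a \<Rightarrow> real"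
  assumes Y: "Y \<in> borel_measurable M" "integrable M (\<lambda>\<omega>. (Y \<omega>)\<^sup>2)"
    and X: "X \<in> borel_measurable M" "integrable M (\<lambda>\<omega>. (X \<omega>)\<^sup>2)"
    and X': "\<And>n. X' n \<in> borel_measurable M" "\<And>n. integrable M (\<lambda>\<omega>. Y \<omega> * X' n \<omega>)"
      "\<And>n. (\<integral>\<omega>. Y \<omega> * X' n \<omega> \<partial>M) = 0"
    and lim: "(\<lambda>n. \<integral>\<^sup>+\<omega>. ennreal ((X' n \<omega> - X \<omega>)\<^sup>2) \<partial>M) \<longlonglongrightarrow> 0"
  shows "(\<integral>\<omega>. Y \<omega> * X \<omega> \<partial>M) = 0"
proof -
  define c where "c = (\<integral>\<omega>. Y \<omega> * X \<omega> \<partial>M)"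
  have YX: "integrable M (\<lambda>\<omega>. Y \<omega> * X \<omega>)"
    using Y(1) X(1) Y(2) X(2) by (rule integrable_mult_square_integrable)
  have bound: "(ennreal \<bar>c\<bar>)\<^sup>2 \<le> (\<integral>\<^sup>+\<omega>. ennreal ((Y \<omega>)\<^sup>2) \<partial>M) * (\<integral>\<^sup>+\<omega>. ennreal ((X' n \<omega> - X \<omega>)\<^sup>2) \<partial>M)" for n
  proof -
    have int: "integrable M (\<lambda>\<omega>. Y \<omega> * (X \<omega> - X' n \<omega>))"
      using YX X'(2)[of n] by (simp add: right_diff_distrib)
    have "c = (\<integral>\<omega>. Y \<omega> * (X \<omega> - X' n \<omega>) \<partial>M)"
      using YX X'(2,3)[of n] by (simp add: c_def right_diff_distrib)
    then have "ennreal \<bar>c\<bar> = ennreal (norm (\<integral>\<omega>. Y \<omega> * (X \<omega> - X' n \<omega>) \<partial>M))"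
      by (simp only: real_norm_def)
    also have "\<dots> \<le> (\<integral>\<^sup>+\<omega>. ennreal (norm (Y \<omega> * (X \<omega> - X' n \<omega>))) \<partial>M)"
      by (rule integral_norm_bound_ennreal[OF int])
    also have "\<dots> = (\<integral>\<^sup>+\<omega>. ennreal \<bar>Y \<omega>\<bar> * ennreal \<bar>X' n \<omega> - X \<omega>\<bar> \<partial>M)"
      by (intro nn_integral_cong) (simp add: abs_mult ennreal_mult abs_minus_commute)
    finally have "ennreal \<bar>c\<bar> \<le> (\<integral>\<^sup>+\<omega>. ennreal \<bar>Y \<omega>\<bar> * ennreal \<bar>X' n \<omega> - X \<omega>\<bar> \<partial>M)" .
    then have "(ennreal \<bar>c\<bar>)\<^sup>2 \<le> (\<integral>\<^sup>+\<omega>. ennreal \<bar>Y \<omega>\<bar> * ennreal \<bar>X' n \<omega> - X \<omega>\<bar> \<partial>M)\<^sup>2"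
      by (intro power_mono) auto
    also have "\<dots> \<le> (\<integral>\<^sup>+\<omega>. (ennreal \<bar>Y \<omega>\<bar>)\<^sup>2 \<partial>M) * (\<integral>\<^sup>+\<omega>. (ennreal \<bar>X' n \<omega> - X \<omega>\<bar>)\<^sup>2 \<partial>M)"
      using Y X X' by (intro Cauchy_Schwarz_nn_integral) auto
    also have "\<dots> = (\<integral>\<^sup>+\<omega>. ennreal ((Y \<omega>)\<^sup>2) \<partial>M) * (\<integral>\<^sup>+\<omega>. ennreal ((X' n \<omega> - X \<omega>)\<^sup>2) \<partial>M)"
      by (simp add: ennreal_power)
    finally show ?thesis .
  qed
  have "(\<lambda>n. (\<integral>\<^sup>+\<omega>. ennreal ((Y \<omega>)\<^sup>2) \<partial>M) * (\<integral>\<^sup>+\<omega>. ennreal ((X' n \<omega> - X \<omega>)\<^sup>2) \<partial>M)) \<longlonglongrightarrow>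
      (\<integral>\<^sup>+\<omega>. ennreal ((Y \<omega>)\<^sup>2) \<partial>M) * 0"
    using Y(2) lim by (intro ennreal_tendsto_cmult) (auto simp: integrable_iff_bounded)
  then have "(ennreal \<bar>c\<bar>)\<^sup>2 \<le> 0"
    using bound by (intro tendsto_lowerbound) (auto intro: always_eventually)
  then show ?thesis
    by (simp add: c_def)
qed

section \<open>Integration by parts for primitives\<close>

lemma borel_measurable_primitive [measurable]:
  fixes f :: "real \<Rightarrow> real"
  assumes [measurable]: "f \<in> borel_measurable borel"
  shows "(\<lambda>t. LINT s:{0..t}|lborel. f s) \<in> borel_measurable borel"
proof -
  have "(\<lambda>t. LBINT s. (if 0 \<le> s \<and> s \<le> t then f s else 0)) \<in> borel_measurable borel"
    by measurable
  moreover have "(LINT s:{0..t}|lborel. f s) = (LBINT s. (if 0 \<le> s \<and> s \<le> t then f s else 0))" for t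
    unfolding set_lebesgue_integral_def by (intro Bochner_Integration.integral_cong) (auto simp: indicator_def)
  ultimately show ?thesis by simp
qed

lemma measurable_primitive_pair [measurable]:
  fixes g :: "real \<Rightarrow> 'b \<Rightarrow> real"
  assumes [measurable]: "(\<lambda>(s, \<omega>). g s \<omega>) \<in> borel_measurable (lborel \<Otimes>\<^sub>M N)"
  shows "(\<lambda>(t, \<omega>). LINT s:{0..t}|lborel. g s \<omega>) \<in> borel_measurable (lborel \<Otimes>\<^sub>M N)"
proof -
  have "(\<lambda>(t, \<omega>). LBINT s. (if 0 \<le> s \<and> s \<le> t then g s \<omega> else 0)) \<in> borel_measurable (lborel \<Otimes>\<^sub>M N)"
    by measurable
  moreover have "(LINT s:{0..t}|lborel. g s \<omega>) = (LBINT s. (if 0 \<le> s \<and> s \<le> t then g s \<omega> else 0))" for t \<omega>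
    unfolding set_lebesgue_integral_def by (intro Bochner_Integration.integral_cong) (auto simp: indicator_def)
  ultimately show ?thesis by simp
qed

lemma (in pair_sigma_finite) integrable_mult_pair:
  fixes f :: "'a \<Rightarrow> real" and g :: "'b \<Rightarrow> real"
  assumes f: "integrable M1 f" and g: "integrable M2 g"
  shows "integrable (M1 \<Otimes>\<^sub>M M2) (\<lambda>(x, y). f x * g y)"
proof -
  have [measurable]: "f \<in> borel_measurable M1" "g \<in> borel_measurable M2"
    using f g by auto
  have "(\<integral>\<^sup>+z. ennreal (norm (f (fst z) * g (snd z))) \<partial>(M1 \<Otimes>\<^sub>M M2))
      = (\<integral>\<^sup>+x. (\<integral>\<^sup>+y. ennreal (norm (f x)) * ennreal (norm (g y)) \<partial>M2) \<partial>M1)"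
    by (subst M2.nn_integral_fst[symmetric]) (auto simp: abs_mult ennreal_mult)
  also have "\<dots> = (\<integral>\<^sup>+x. ennreal (norm (f x)) \<partial>M1) * (\<integral>\<^sup>+y. ennreal (norm (g y)) \<partial>M2)"
    by (simp add: nn_integral_cmult nn_integral_multc)
  also have "\<dots> < \<infinity>"
    using f g by (auto simp: integrable_iff_bounded ennreal_mult_less_top)
  finally show ?thesis
    by (subst integrable_iff_bounded) (auto simp: split_beta')
qed

lemma set_integral_primitive_by_parts:
  fixes f g :: "real \<Rightarrow> real"
  assumes f: "set_integrable lborel {0..T} f" and g: "set_integrable lborel {0..T} g"
  defines "F \<equiv> \<lambda>t. LINT s:{0..t}|lborel. f s" and "G \<equiv> \<lambda>t. LINT s:{0..t}|lborel. g s"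
  shows "set_integrable lborel {0..T} (\<lambda>t. g t * F t)" "set_integrable lborel {0..T} (\<lambda>t. f t * G t)"
    and "(LINT t:{0..T}|lborel. g t * F t) = F T * G T - (LINT t:{0..T}|lborel. f t * G t)"
proof -
  define f' g' where "f' = (\<lambda>x. indicator {0..T} x * f x)" and "g' = (\<lambda>x. indicator {0..T} x * g x)"
  have f'_int: "integrable lborel f'" and g'_int: "integrable lborel g'"
    using f g by (simp_all add: f'_def g'_def set_integrable_def)
  then have [measurable]: "f' \<in> borel_measurable borel" "g' \<in> borel_measurable borel"
    by auto
  define hh where "hh x y = (if x \<le> y then f' x * g' y else 0)" for x y
  have hh: "integrable (lborel \<Otimes>\<^sub>M lborel) (\<lambda>(x, y). hh x y)"
  proof (rule Bochner_Integration.integrable_bound[OF lborel_pair.integrable_mult_pair[OF f'_int g'_int]])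
    show "(\<lambda>(x, y). hh x y) \<in> borel_measurable (lborel \<Otimes>\<^sub>M lborel)"
      unfolding hh_def by measurable
  qed (auto simp: hh_def)
  have inner_fst: "(LBINT x. hh x y) = indicator {0..T} y * (g y * F y)" for y
  proof (cases "y \<in> {0..T}")
    case True
    then have "(LBINT x. hh x y) = (LBINT x. g' y * (indicator {0..y} x * f x))"
      by (intro Bochner_Integration.integral_cong) (auto simp: hh_def f'_def indicator_def)
    then show ?thesis
      using True by (simp add: F_def g'_def set_lebesgue_integral_def)
  next
    case False
    then have "hh x y = 0" for x
      by (simp add: hh_def g'_def)
    with False show ?thesis by simp
  qed
  have inner_snd: "(LBINT y. hh x y) = indicator {0..T} x * (f x * (G T - G x))" for x
  proof (cases "x \<in> {0..T}")
    case True
    have g_sub: "set_integrable lborel {0..x} g" "set_integrable lborel {0..<x} g"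
      using True by (auto intro: set_integrable_subset[OF g])
    have "(LINT y:{0..<x}|lborel. g y) = G x"
      unfolding G_def set_lebesgue_integral_def using g_sub unfolding set_integrable_def
      by (intro integral_cong_AE) (auto intro: eventually_mono[OF AE_lborel_singleton[of x]] simp: indicator_def)
    moreover have "(LBINT y. hh x y) = (LBINT y. f' x * (indicator {0..T} y * g y - indicator {0..<x} y * g y))"
      using True by (intro Bochner_Integration.integral_cong) (auto simp: hh_def g'_def indicator_def)
    ultimately show ?thesis
      using True g g_sub by (simp add: G_def f'_def set_integrable_def set_lebesgue_integral_def)
  next
    case False
    then have "hh x y = 0" for y
      by (simp add: hh_def f'_def)
    with False show ?thesis by simp
  qed
  have gF: "integrable lborel (\<lambda>y. indicator {0..T} y * (g y * F y))"
    using lborel_pair.integrable_snd[OF hh] by (simp add: inner_fst)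
  have "integrable lborel (\<lambda>x. indicator {0..T} x * (f x * (G T - G x)))"
    using lborel_pair.integrable_fst'[OF hh] by (simp add: inner_snd)
  then have "integrable lborel (\<lambda>x. f' x * G T - indicator {0..T} x * (f x * (G T - G x)))"
    using f'_int by auto
  then have fG: "integrable lborel (\<lambda>x. indicator {0..T} x * (f x * G x))"
    by (simp add: f'_def algebra_simps)
  show "set_integrable lborel {0..T} (\<lambda>t. g t * F t)" "set_integrable lborel {0..T} (\<lambda>t. f t * G t)"
    using gF fG by (simp_all add: set_integrable_def)
  have "(LINT t:{0..T}|lborel. g t * F t) = (LBINT y. LBINT x. hh x y)"
    by (simp add: inner_fst set_lebesgue_integral_def)
  also have "\<dots> = (LBINT x. LBINT y. hh x y)"
    using lborel_pair.Fubini_integral[OF hh] by (simp add: split_beta')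
  also have "\<dots> = (LBINT x. f' x * G T - indicator {0..T} x * (f x * G x))"
    by (simp add: inner_snd f'_def algebra_simps)
  also have "\<dots> = F T * G T - (LINT t:{0..T}|lborel. f t * G t)"
    using f'_int fG by (simp add: F_def f'_def set_lebesgue_integral_def)
  finally show "(LINT t:{0..T}|lborel. g t * F t) = F T * G T - (LINT t:{0..T}|lborel. f t * G t)" .
qed

lemma set_integral_product_rule:
  fixes \<delta> h P :: "real \<Rightarrow> real"
  assumes \<delta>: "set_integrable lborel {0..T} \<delta>" and h: "set_integrable lborel {0..T} h"
    and P\<delta>: "set_integrable lborel {0..T} (\<lambda>t. P t * \<delta> t)"
  defines "D \<equiv> \<lambda>t. LINT s:{0..t}|lborel. \<delta> s" and "A \<equiv> \<lambda>t. LINT s:{0..t}|lborel. h s"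
  shows "set_integrable lborel {0..T} (\<lambda>t. h t * D t)"
    and "P T * D T - (LINT t:{0..T}|lborel. P t * \<delta> t + h t * D t)
      = (LINT t:{0..T}|lborel. \<delta> t * ((P T - A T) - (P t - A t)))"
proof -
  note by_parts = set_integral_primitive_by_parts[OF \<delta> h]
  show "set_integrable lborel {0..T} (\<lambda>t. h t * D t)"
    unfolding D_def by (rule by_parts(1))
  have "(LINT t:{0..T}|lborel. \<delta> t * ((P T - A T) - (P t - A t)))
      = (P T - A T) * D T - (LINT t:{0..T}|lborel. P t * \<delta> t) + (LINT t:{0..T}|lborel. \<delta> t * A t)"
    using \<delta> P\<delta> by_parts(2) unfolding D_def A_def by (simp add: algebra_simps)
  also have "\<dots> = P T * D T - (LINT t:{0..T}|lborel. P t * \<delta> t + h t * D t)"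
    using P\<delta> by_parts unfolding D_def A_def by (simp add: algebra_simps)
  finally show "P T * D T - (LINT t:{0..T}|lborel. P t * \<delta> t + h t * D t)
      = (LINT t:{0..T}|lborel. \<delta> t * ((P T - A T) - (P t - A t)))" ..
qed

section \<open>The Brownian filtration\<close>

lemma sigma_algebra_null_augmentation:
  assumes \<Sigma>: "sigma_algebra (space M) \<Sigma>" "\<Sigma> \<subseteq> sets M"
  shows "sigma_algebra (space M) {A \<in> sets M. \<exists>B\<in>\<Sigma>. (A - B) \<union> (B - A) \<in> null_sets M}"
    (is "sigma_algebra _ ?A")
  unfolding sigma_algebra_iff2
proof (intro conjI ballI allI impI)
  interpret \<Sigma>: sigma_algebra "space M" \<Sigma> by (rule \<Sigma>(1))
  show "?A \<subseteq> Pow (space M)"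
    using sets.sets_into_space by blast
  show "{} \<in> ?A"
    by (auto intro!: bexI[of _ "{}"])
next
  interpret \<Sigma>: sigma_algebra "space M" \<Sigma> by (rule \<Sigma>(1))
  fix A assume "A \<in> ?A"
  then obtain B where B: "B \<in> \<Sigma>" "(A - B) \<union> (B - A) \<in> null_sets M" "A \<in> sets M"
    by auto
  moreover have "((space M - A) - (space M - B)) \<union> ((space M - B) - (space M - A)) = (A - B) \<union> (B - A)"
    using B \<Sigma>.sets_into_space sets.sets_into_space by blast
  ultimately show "space M - A \<in> ?A"
    by (intro CollectI conjI bexI[of _ "space M - B"]) auto
next
  interpret \<Sigma>: sigma_algebra "space M" \<Sigma> by (rule \<Sigma>(1))
  fix A :: "nat \<Rightarrow> 'a set" assume "range A \<subseteq> ?A"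
  then obtain B where B: "\<And>i. B i \<in> \<Sigma>" "\<And>i. (A i - B i) \<union> (B i - A i) \<in> null_sets M"
    and A: "\<And>i. A i \<in> sets M"
    by (simp add: image_subset_iff) metis
  have "((\<Union>i. A i) - (\<Union>i. B i)) \<union> ((\<Union>i. B i) - (\<Union>i. A i)) \<in> null_sets M"
  proof (rule null_sets_subset)
    show "(\<Union>i. (A i - B i) \<union> (B i - A i)) \<in> null_sets M"
      using B(2) by (intro null_sets_UN) auto
    show "((\<Union>i. A i) - (\<Union>i. B i)) \<union> ((\<Union>i. B i) - (\<Union>i. A i)) \<in> sets M"
      using A B(1) \<Sigma>(2) by (intro sets.Un sets.Diff sets.countable_UN) auto
  qed blast
  then show "(\<Union>i. A i) \<in> ?A"
    using A B(1) by (intro CollectI conjI bexI[of _ "\<Union>i. B i"]) auto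
qed

lemma (in prob_space) indep_set_null_augmentation:
  assumes indep: "indep_set \<Sigma> C" and "\<Sigma> \<subseteq> events"
  shows "indep_set {A \<in> events. \<exists>B\<in>\<Sigma>. (A - B) \<union> (B - A) \<in> null_sets M} C"
  unfolding indep_sets2_eq
proof (intro conjI ballI)
  show "C \<subseteq> events" using indep unfolding indep_sets2_eq by blast
  fix A D assume A: "A \<in> {A \<in> events. \<exists>B\<in>\<Sigma>. (A - B) \<union> (B - A) \<in> null_sets M}" and D: "D \<in> C"
  then obtain B where B: "B \<in> \<Sigma>" "(A - B) \<union> (B - A) \<in> null_sets M" "A \<in> events"
    by auto
  have events: "B \<in> events" "D \<in> events"
    using B(1) D assms \<open>C \<subseteq> events\<close> by auto
  have ae: "AE \<omega> in M. \<omega> \<notin> (A - B) \<union> (B - A)"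
    using B(2) by (rule AE_not_in)
  have "prob A = prob B" "prob (A \<inter> D) = prob (B \<inter> D)"
    using ae B(3) events by (auto intro!: measure_eq_AE)
  moreover have "prob (B \<inter> D) = prob B * prob D"
    using indep B(1) D by (rule indep_setD)
  ultimately show "prob (A \<inter> D) = prob A * prob D"
    by simp
qed auto

locale brownian =
  fixes M :: "'a measure" and W :: "real \<Rightarrow> 'a \<Rightarrow> real"
  assumes brownian_motion: "brownian_motion M W"
begin

sublocale prob_space M
  using brownian_motion unfolding brownian_motion_def by blast

lemma measurable_W [measurable]: "W t \<in> borel_measurable M"
  using brownian_motion unfolding brownian_motion_def by blast

lemma gen_sets_subset: "gen_sets M W t \<subseteq> sets M"
  unfolding gen_sets_def by (rule sets.sigma_sets_subset) auto

lemma std_filtration_eq: "std_filtration M W t = {A \<in> events. \<exists>B\<in>gen_sets M W t. (A - B) \<union> (B - A) \<in> null_sets M}"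
  by (simp add: std_filtration_def)

lemma std_filtration_subset: "std_filtration M W t \<subseteq> sets M"
  unfolding std_filtration_def by auto

lemma gen_sets_subset_std_filtration: "gen_sets M W t \<subseteq> std_filtration M W t"
  using gen_sets_subset unfolding std_filtration_def by (auto intro!: bexI)

lemma sigma_algebra_std_filtration: "sigma_algebra (space M) (std_filtration M W t)"
  unfolding std_filtration_eq gen_sets_def
  by (intro sigma_algebra_null_augmentation sigma_algebra_sigma_sets gen_sets_subset[unfolded gen_sets_def]) auto

definition Filt :: "real \<Rightarrow> 'a measure" where
  "Filt t = measure_of (space M) (std_filtration M W t) (\<lambda>_. 0)"

lemma sets_Filt [simp]: "sets (Filt t) = std_filtration M W t"
  unfolding Filt_def using sigma_algebra_std_filtration by (rule sigma_algebra.sets_measure_of_eq)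

lemma space_Filt [simp]: "space (Filt t) = space M"
  unfolding Filt_def by (rule space_measure_of_conv)

lemma measurable_Filt_iff:
  "Y \<in> borel_measurable (Filt t) \<longleftrightarrow> (\<forall>B\<in>sets borel. Y -` B \<inter> space M \<in> std_filtration M W t)"
  unfolding measurable_def by auto

lemma measurable_Filt_imp_measurable: "Y \<in> borel_measurable (Filt t) \<Longrightarrow> Y \<in> borel_measurable M"
  by (rule measurable_from_subalg[of M "Filt t"]) (auto simp: subalgebra_def std_filtration_subset)

lemma measurable_Filt_mono: "s \<le> t \<Longrightarrow> Y \<in> borel_measurable (Filt s) \<Longrightarrow> Y \<in> borel_measurable (Filt t)"
proof (rule measurable_from_subalg[of "Filt t" "Filt s"])
  assume "s \<le> t"
  then have "gen_sets M W s \<subseteq> gen_sets M W t"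
    unfolding gen_sets_def by (intro sigma_sets_mono' UN_mono) auto
  then show "subalgebra (Filt t) (Filt s)"
    by (auto simp: subalgebra_def std_filtration_def)
qed

lemma W_measurable_Filt: "0 \<le> r \<Longrightarrow> r \<le> t \<Longrightarrow> W r \<in> borel_measurable (Filt t)"
  unfolding measurable_Filt_iff
proof
  fix B :: "real set" assume "0 \<le> r" "r \<le> t" "B \<in> sets borel"
  then have "W r -` B \<inter> space M \<in> gen_sets M W t"
    unfolding gen_sets_def by (intro sigma_sets.Basic UN_I[of r]) auto
  then show "W r -` B \<inter> space M \<in> std_filtration M W t"
    using gen_sets_subset_std_filtration by blast
qed

lemma indep_var_increment:
  assumes "0 \<le> a" "a < b" and Y: "Y \<in> borel_measurable (Filt a)"
  shows "indep_var borel Y borel (\<lambda>\<omega>. W b \<omega> - W a \<omega>)"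
  unfolding indep_var_eq
proof (intro conjI)
  define Inc where "Inc = {(\<lambda>\<omega>. W b \<omega> - W a \<omega>) -` B \<inter> space M | B. B \<in> sets (borel :: real measure)}"
  show "random_variable borel Y" using measurable_Filt_imp_measurable[OF Y] by simp
  show "random_variable borel (\<lambda>\<omega>. W b \<omega> - W a \<omega>)" by measurable
  have "indep_set (gen_sets M W a) Inc"
    using brownian_motion assms unfolding brownian_motion_def Inc_def by blast
  then have "indep_set (std_filtration M W a) Inc"
    unfolding std_filtration_eq using gen_sets_subset by (rule indep_set_null_augmentation)
  moreover have "Int_stable (std_filtration M W a)"
    using algebra.Int_stable[OF sigma_algebra.axioms(1)[OF sigma_algebra_std_filtration]] .
  moreover have "Int_stable Inc"
  proof (rule Int_stableI)
    fix A B assume "A \<in> Inc" "B \<in> Inc"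
    then obtain C D where "A = (\<lambda>\<omega>. W b \<omega> - W a \<omega>) -` C \<inter> space M" "C \<in> sets borel"
      "B = (\<lambda>\<omega>. W b \<omega> - W a \<omega>) -` D \<inter> space M" "D \<in> sets borel"
      unfolding Inc_def by auto
    then show "A \<inter> B \<in> Inc"
      unfolding Inc_def by (intro CollectI exI[of _ "C \<inter> D"]) auto
  qed
  ultimately have "indep_sets (\<lambda>i. sigma_sets (space M) (case_bool (std_filtration M W a) Inc i)) UNIV"
    unfolding indep_set_def by (subst indep_sets_sigma_sets_iff) (auto split: bool.split)
  then show "indep_set (sigma_sets (space M) {Y -` A \<inter> space M |A. A \<in> sets borel})
     (sigma_sets (space M) {(\<lambda>\<omega>. W b \<omega> - W a \<omega>) -` A \<inter> space M |A. A \<in> sets borel})"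
    unfolding indep_set_def
  proof (rule indep_sets_mono_sets)
    fix i :: bool
    have "sigma_sets (space M) {Y -` A \<inter> space M |A. A \<in> sets borel} \<subseteq> sigma_sets (space M) (std_filtration M W a)"
      using Y unfolding measurable_Filt_iff by (intro sigma_sets_mono) (auto intro: sigma_sets.Basic)
    then show "case_bool (sigma_sets (space M) {Y -` A \<inter> space M |A. A \<in> sets borel})
          (sigma_sets (space M) {(\<lambda>\<omega>. W b \<omega> - W a \<omega>) -` A \<inter> space M |A. A \<in> sets borel}) i
         \<subseteq> sigma_sets (space M) (case_bool (std_filtration M W a) Inc i)"
      by (cases i) (auto simp: Inc_def)
  qed
qed

lemma increment_moments:
  assumes "0 \<le> a" "a \<le> b"
  shows "integrable M (\<lambda>\<omega>. W b \<omega> - W a \<omega>)" "expectation (\<lambda>\<omega>. W b \<omega> - W a \<omega>) = 0"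
    "integrable M (\<lambda>\<omega>. (W b \<omega> - W a \<omega>)\<^sup>2)" "expectation (\<lambda>\<omega>. (W b \<omega> - W a \<omega>)\<^sup>2) = b - a"
proof -
  have "(integrable M (\<lambda>\<omega>. W b \<omega> - W a \<omega>) \<and> expectation (\<lambda>\<omega>. W b \<omega> - W a \<omega>) = 0) \<and>
        (integrable M (\<lambda>\<omega>. (W b \<omega> - W a \<omega>)\<^sup>2) \<and> expectation (\<lambda>\<omega>. (W b \<omega> - W a \<omega>)\<^sup>2) = b - a)"
  proof (cases "a = b")
    case False
    then have ab: "a < b" using assms by simp
    define \<sigma> where "\<sigma> = sqrt (b - a)"
    have \<sigma>: "\<sigma> > 0" unfolding \<sigma>_def using ab by simp
    have D: "distributed M lborel (\<lambda>\<omega>. W b \<omega> - W a \<omega>) (\<lambda>x. ennreal (normal_density 0 \<sigma> x))"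
      using brownian_motion assms ab unfolding brownian_motion_def \<sigma>_def by blast
    have "integrable M (\<lambda>\<omega>. W b \<omega> - W a \<omega>)"
      by (rule distributed_integrable_var[OF D]) (use integrable_normal_moment_nz_1[OF \<sigma>] in simp_all)
    moreover have "expectation (\<lambda>\<omega>. W b \<omega> - W a \<omega>) = 0"
      by (rule normal_distributed_expectation[OF \<sigma> D])
    moreover have "integrable M (\<lambda>\<omega>. (W b \<omega> - W a \<omega>)\<^sup>2)"
      using distributed_integrable[OF D, of "\<lambda>x. x\<^sup>2"] integrable_normal_moment[OF \<sigma>, of 0 2] by simp
    moreover have "variance (\<lambda>\<omega>. W b \<omega> - W a \<omega>) = \<sigma>\<^sup>2"
      by (rule normal_distributed_variance[OF \<sigma> D])
    ultimately show ?thesis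
      using ab by (simp add: \<sigma>_def)
  qed simp
  then show "integrable M (\<lambda>\<omega>. W b \<omega> - W a \<omega>)" "expectation (\<lambda>\<omega>. W b \<omega> - W a \<omega>) = 0"
    "integrable M (\<lambda>\<omega>. (W b \<omega> - W a \<omega>)\<^sup>2)" "expectation (\<lambda>\<omega>. (W b \<omega> - W a \<omega>)\<^sup>2) = b - a"
    by blast+
qed

lemma integral_mult_increment:
  assumes "0 \<le> a" "a \<le> b" and Y: "Y \<in> borel_measurable (Filt a)" "integrable M Y"
  shows "integrable M (\<lambda>\<omega>. Y \<omega> * (W b \<omega> - W a \<omega>))"
    "expectation (\<lambda>\<omega>. Y \<omega> * (W b \<omega> - W a \<omega>)) = 0"
proof -
  have "integrable M (\<lambda>\<omega>. Y \<omega> * (W b \<omega> - W a \<omega>)) \<and> expectation (\<lambda>\<omega>. Y \<omega> * (W b \<omega> - W a \<omega>)) = 0"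
  proof (cases "a = b")
    case False
    then have indep: "indep_var borel Y borel (\<lambda>\<omega>. W b \<omega> - W a \<omega>)"
      using assms by (intro indep_var_increment) auto
    show ?thesis
      using indep_var_integrable[OF indep Y(2) increment_moments(1)[OF assms(1,2)]]
        indep_var_lebesgue_integral[OF indep Y(2) increment_moments(1)[OF assms(1,2)]]
        increment_moments(2)[OF assms(1,2)] by simp
  qed simp
  then show "integrable M (\<lambda>\<omega>. Y \<omega> * (W b \<omega> - W a \<omega>))"
    "expectation (\<lambda>\<omega>. Y \<omega> * (W b \<omega> - W a \<omega>)) = 0" by blast+
qed

lemma integral_mult_increment_square:
  assumes "0 \<le> a" "a \<le> b" and Y: "Y \<in> borel_measurable (Filt a)" "integrable M Y"
  shows "integrable M (\<lambda>\<omega>. Y \<omega> * (W b \<omega> - W a \<omega>)\<^sup>2)"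
    "expectation (\<lambda>\<omega>. Y \<omega> * (W b \<omega> - W a \<omega>)\<^sup>2) = expectation Y * (b - a)"
proof -
  have "integrable M (\<lambda>\<omega>. Y \<omega> * (W b \<omega> - W a \<omega>)\<^sup>2) \<and>
      expectation (\<lambda>\<omega>. Y \<omega> * (W b \<omega> - W a \<omega>)\<^sup>2) = expectation Y * (b - a)"
  proof (cases "a = b")
    case False
    then have "indep_var borel Y borel (\<lambda>\<omega>. W b \<omega> - W a \<omega>)"
      using assms by (intro indep_var_increment) auto
    then have indep: "indep_var borel Y borel (\<lambda>\<omega>. (W b \<omega> - W a \<omega>)\<^sup>2)"
      using indep_var_compose[unfolded comp_def, of borel Y borel _ "\<lambda>x. x" borel "\<lambda>x. x\<^sup>2" borel] by simp
    show ?thesis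
      using indep_var_integrable[OF indep Y(2) increment_moments(3)[OF assms(1,2)]]
        indep_var_lebesgue_integral[OF indep Y(2) increment_moments(3)[OF assms(1,2)]]
        increment_moments(4)[OF assms(1,2)] by simp
  qed simp
  then show "integrable M (\<lambda>\<omega>. Y \<omega> * (W b \<omega> - W a \<omega>)\<^sup>2)"
    "expectation (\<lambda>\<omega>. Y \<omega> * (W b \<omega> - W a \<omega>)\<^sup>2) = expectation Y * (b - a)" by blast+
qed

end

section \<open>Simple Ito integrals\<close>

definition proc_sq_norm :: "'a measure \<Rightarrow> real \<Rightarrow> (real \<Rightarrow> 'a \<Rightarrow> real) \<Rightarrow> ennreal" where
  "proc_sq_norm M T f = (\<integral>\<^sup>+\<omega>. (\<integral>\<^sup>+t. ennreal ((f t \<omega>)\<^sup>2) * indicator {0..T} t \<partial>lborel) \<partial>M)"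

lemma proc_sq_norm_cong:
  "(\<And>t \<omega>. t \<in> {0..T} \<Longrightarrow> f t \<omega> = g t \<omega>) \<Longrightarrow> proc_sq_norm M T f = proc_sq_norm M T g"
  unfolding proc_sq_norm_def by (intro nn_integral_cong) (auto simp: indicator_def)

lemma (in sigma_finite_measure) proc_sq_norm_le:
  fixes f g :: "real \<Rightarrow> 'a \<Rightarrow> real"
  assumes [measurable]: "(\<lambda>(t, \<omega>). f t \<omega>) \<in> borel_measurable (lborel \<Otimes>\<^sub>M M)"
    "(\<lambda>(t, \<omega>). g t \<omega>) \<in> borel_measurable (lborel \<Otimes>\<^sub>M M)"
  shows "proc_sq_norm M T f \<le> 2 * proc_sq_norm M T (\<lambda>t \<omega>. f t \<omega> - g t \<omega>) + 2 * proc_sq_norm M T g"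
proof -
  interpret pair_sigma_finite lborel M ..
  have [measurable]:
    "(\<lambda>x. ennreal ((f (fst x) (snd x) - g (fst x) (snd x))\<^sup>2) * indicator {0..T} (fst x)) \<in> borel_measurable (lborel \<Otimes>\<^sub>M M)"
    "(\<lambda>x. ennreal ((g (fst x) (snd x))\<^sup>2) * indicator {0..T} (fst x)) \<in> borel_measurable (lborel \<Otimes>\<^sub>M M)"
    using assms by (simp_all add: split_beta')
  have "proc_sq_norm M T f \<le> (\<integral>\<^sup>+\<omega>. (\<integral>\<^sup>+t. 2 * (ennreal ((f t \<omega> - g t \<omega>)\<^sup>2) * indicator {0..T} t)
      + 2 * (ennreal ((g t \<omega>)\<^sup>2) * indicator {0..T} t) \<partial>lborel) \<partial>M)"
    unfolding proc_sq_norm_def by (intro nn_integral_mono) (auto simp: indicator_def ennreal_square_le)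
  also have "\<dots> = (\<integral>\<^sup>+x. 2 * (ennreal ((f (fst x) (snd x) - g (fst x) (snd x))\<^sup>2) * indicator {0..T} (fst x))
      + 2 * (ennreal ((g (fst x) (snd x))\<^sup>2) * indicator {0..T} (fst x)) \<partial>(lborel \<Otimes>\<^sub>M M))"
    by (subst nn_integral_snd[symmetric]) auto
  also have "\<dots> = 2 * proc_sq_norm M T (\<lambda>t \<omega>. f t \<omega> - g t \<omega>) + 2 * proc_sq_norm M T g"
    unfolding proc_sq_norm_def by (simp add: nn_integral_add nn_integral_cmult nn_integral_snd[symmetric])
  finally show ?thesis .
qed

locale simple_process = brownian M W for M :: "'a measure" and W +
  fixes T :: real and k :: nat and tt :: "nat \<Rightarrow> real" and \<xi> :: "nat \<Rightarrow> 'a \<Rightarrow> real"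
  assumes tt_0: "tt 0 = 0" and tt_k: "tt k = T" and tt_less: "\<And>i. i < k \<Longrightarrow> tt i < tt (Suc i)"
    and \<xi>_measurable: "\<And>i. i < k \<Longrightarrow> \<xi> i \<in> borel_measurable M"
    and \<xi>_adapted: "\<And>i B. i < k \<Longrightarrow> B \<in> sets borel \<Longrightarrow> \<xi> i -` B \<inter> space M \<in> std_filtration M W (tt i)"
    and \<xi>_square_finite: "\<And>i. i < k \<Longrightarrow> (\<integral>\<^sup>+\<omega>. ennreal ((\<xi> i \<omega>)\<^sup>2) \<partial>M) < \<infinity>"
begin

lemma tt_mono: "i \<le> j \<Longrightarrow> j \<le> k \<Longrightarrow> tt i \<le> tt j"
proof (induction j)
  case 0 then show ?case by simp
next
  case (Suc j)
  show ?case
  proof (cases "i = Suc j")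
    case True then show ?thesis by simp
  next
    case False
    then have "i \<le> j" using Suc.prems by simp
    then have "tt i \<le> tt j" using Suc by simp
    also have "tt j < tt (Suc j)" using Suc.prems by (intro tt_less) simp
    finally show ?thesis by simp
  qed
qed

lemma tt_nonneg: "i \<le> k \<Longrightarrow> 0 \<le> tt i"
  using tt_mono[of 0 i] tt_0 by simp

lemma tt_le_T: "i \<le> k \<Longrightarrow> tt i \<le> T"
  using tt_mono[of i k] tt_k by simp

lemma \<xi>_measurable_Filt: "i < k \<Longrightarrow> \<xi> i \<in> borel_measurable (Filt (tt i))"
  unfolding measurable_Filt_iff using \<xi>_adapted by blast

lemma integrable_\<xi>_square: "i < k \<Longrightarrow> integrable M (\<lambda>\<omega>. (\<xi> i \<omega>)\<^sup>2)"
  using \<xi>_square_finite[of i] \<xi>_measurable[of i] by (simp add: integrable_iff_bounded)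

definition summand :: "nat \<Rightarrow> real \<Rightarrow> 'a \<Rightarrow> real" where
  "summand i r \<omega> = \<xi> i \<omega> * (W (min r (tt (Suc i))) \<omega> - W (min r (tt i)) \<omega>)"

lemma summand_eq_0: "r \<le> tt i \<Longrightarrow> i < k \<Longrightarrow> summand i r \<omega> = 0"
  unfolding summand_def using tt_less[of i] by (simp add: min_def)

lemma summand_measurable_square_moment:
  assumes i: "i < k" and r: "0 \<le> r"
  shows "summand i r \<in> borel_measurable (Filt (min r (tt (Suc i))))"
    "integrable M (\<lambda>\<omega>. (summand i r \<omega>)\<^sup>2)"
    "expectation (\<lambda>\<omega>. (summand i r \<omega>)\<^sup>2) = expectation (\<lambda>\<omega>. (\<xi> i \<omega>)\<^sup>2) * (min r (tt (Suc i)) - min r (tt i))"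
proof -
  have ti: "0 \<le> tt i" "tt i < tt (Suc i)" using tt_nonneg[of i] tt_less[OF i] i by auto
  have "summand i r \<in> borel_measurable (Filt (min r (tt (Suc i)))) \<and>
    integrable M (\<lambda>\<omega>. (summand i r \<omega>)\<^sup>2) \<and>
    expectation (\<lambda>\<omega>. (summand i r \<omega>)\<^sup>2) = expectation (\<lambda>\<omega>. (\<xi> i \<omega>)\<^sup>2) * (min r (tt (Suc i)) - min r (tt i))"
  proof (cases "tt i \<le> r")
    case True
    define m where "m = min r (tt (Suc i))"
    have m: "tt i \<le> m" "0 \<le> m" unfolding m_def using True ti by auto
    have mi: "min r (tt i) = tt i" using True by simp
    have "\<xi> i \<in> borel_measurable (Filt m)" using measurable_Filt_mono[OF m(1) \<xi>_measurable_Filt[OF i]] .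
    moreover have "W m \<in> borel_measurable (Filt m)" "W (tt i) \<in> borel_measurable (Filt m)"
      using W_measurable_Filt m ti by auto
    ultimately have meas: "summand i r \<in> borel_measurable (Filt m)"
      unfolding summand_def mi m_def[symmetric] by measurable
    have sq: "(\<lambda>\<omega>. (summand i r \<omega>)\<^sup>2) = (\<lambda>\<omega>. (\<xi> i \<omega>)\<^sup>2 * (W m \<omega> - W (tt i) \<omega>)\<^sup>2)"
      unfolding summand_def mi m_def[symmetric] by (simp add: power_mult_distrib)
    have Ym: "(\<lambda>\<omega>. (\<xi> i \<omega>)\<^sup>2) \<in> borel_measurable (Filt (tt i))" using \<xi>_measurable_Filt[OF i] by measurable
    show ?thesis
      using meas integral_mult_increment_square[OF ti(1) m(1) Ym integrable_\<xi>_square[OF i]] unfolding sq m_def mi by simp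
  next
    case False
    then have "summand i r = (\<lambda>\<omega>. 0)" using summand_eq_0[of r i] i by (intro ext) simp
    moreover have "min r (tt (Suc i)) - min r (tt i) = 0" using False ti by simp
    ultimately show ?thesis by simp
  qed
  then show "summand i r \<in> borel_measurable (Filt (min r (tt (Suc i))))"
    "integrable M (\<lambda>\<omega>. (summand i r \<omega>)\<^sup>2)"
    "expectation (\<lambda>\<omega>. (summand i r \<omega>)\<^sup>2) = expectation (\<lambda>\<omega>. (\<xi> i \<omega>)\<^sup>2) * (min r (tt (Suc i)) - min r (tt i))"
    by blast+
qed

lemma summand_measurable: "i < k \<Longrightarrow> 0 \<le> r \<Longrightarrow> summand i r \<in> borel_measurable M"
  using summand_measurable_square_moment(1) measurable_Filt_imp_measurable by blast

definition simple_int :: "real \<Rightarrow> 'a \<Rightarrow> real" where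
  "simple_int r \<omega> = (\<Sum>i<k. summand i r \<omega>)"

lemma simple_int_measurable: "0 \<le> r \<Longrightarrow> simple_int r \<in> borel_measurable M"
  unfolding simple_int_def using summand_measurable by (intro borel_measurable_sum) auto

lemma integral_summand_cross:
  assumes ij: "i < j" "j < k" and r: "0 \<le> r"
  shows "integrable M (\<lambda>\<omega>. summand i r \<omega> * summand j r \<omega>)" "expectation (\<lambda>\<omega>. summand i r \<omega> * summand j r \<omega>) = 0"
proof -
  have ik: "i < k" using ij by simp
  have "integrable M (\<lambda>\<omega>. summand i r \<omega> * summand j r \<omega>) \<and> expectation (\<lambda>\<omega>. summand i r \<omega> * summand j r \<omega>) = 0"
  proof (cases "tt j < r")
    case False
    then have "\<And>\<omega>. summand j r \<omega> = 0" using summand_eq_0[of r j] ij by simp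
    then show ?thesis by simp
  next
    case True
    have tj: "0 \<le> tt j" "tt j < tt (Suc j)" using tt_nonneg[of j] tt_less[of j] ij by auto
    define m where "m = min r (tt (Suc j))"
    have m: "tt j \<le> m" unfolding m_def using True tj by auto
    have mj: "min r (tt j) = tt j" using True by simp
    have le: "min r (tt (Suc i)) \<le> tt j" using tt_mono[of "Suc i" j] ij by (simp add: min.coboundedI2)
    have am: "summand i r \<in> borel_measurable (Filt (tt j))" using measurable_Filt_mono[OF le summand_measurable_square_moment(1)[OF ik r]] .
    define Y where "Y \<omega> = summand i r \<omega> * \<xi> j \<omega>" for \<omega>
    have Ym: "Y \<in> borel_measurable (Filt (tt j))" unfolding Y_def using am \<xi>_measurable_Filt[OF ij(2)] by measurable
    have Yi: "integrable M Y" unfolding Y_def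
      using summand_measurable[OF ik r] \<xi>_measurable[OF ij(2)] summand_measurable_square_moment(2)[OF ik r] integrable_\<xi>_square[OF ij(2)] by (rule integrable_mult_square_integrable)
    have eq: "(\<lambda>\<omega>. summand i r \<omega> * summand j r \<omega>) = (\<lambda>\<omega>. Y \<omega> * (W m \<omega> - W (tt j) \<omega>))"
      unfolding Y_def summand_def[of j] mj m_def by (simp add: mult_ac)
    show ?thesis unfolding eq using integral_mult_increment[OF tj(1) m Ym Yi] by simp
  qed
  then show "integrable M (\<lambda>\<omega>. summand i r \<omega> * summand j r \<omega>)" "expectation (\<lambda>\<omega>. summand i r \<omega> * summand j r \<omega>) = 0"
    by blast+
qed

lemma integrable_summand_mult: "i < k \<Longrightarrow> j < k \<Longrightarrow> 0 \<le> r \<Longrightarrow> integrable M (\<lambda>\<omega>. summand i r \<omega> * summand j r \<omega>)"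
  using summand_measurable summand_measurable_square_moment(2) by (intro integrable_mult_square_integrable) auto

lemma simple_int_isometry:
  assumes r: "0 \<le> r"
  shows "integrable M (\<lambda>\<omega>. (simple_int r \<omega>)\<^sup>2)"
    "expectation (\<lambda>\<omega>. (simple_int r \<omega>)\<^sup>2) = (\<Sum>i<k. expectation (\<lambda>\<omega>. (\<xi> i \<omega>)\<^sup>2) * (min r (tt (Suc i)) - min r (tt i)))"
proof -
  have eq: "(\<lambda>\<omega>. (simple_int r \<omega>)\<^sup>2) = (\<lambda>\<omega>. \<Sum>i<k. \<Sum>j<k. summand i r \<omega> * summand j r \<omega>)"
    unfolding simple_int_def power2_eq_square by (simp add: sum_product)
  show "integrable M (\<lambda>\<omega>. (simple_int r \<omega>)\<^sup>2)" unfolding eq using r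
    by (intro Bochner_Integration.integrable_sum integrable_summand_mult) auto
  have E0: "expectation (\<lambda>\<omega>. summand i r \<omega> * summand j r \<omega>) = (if i = j then expectation (\<lambda>\<omega>. (summand i r \<omega>)\<^sup>2) else 0)"
    if "i < k" "j < k" for i j
  proof (cases "i = j")
    case True then show ?thesis by (simp add: power2_eq_square)
  next
    case False
    show ?thesis
    proof (cases "i < j")
      case True then show ?thesis using integral_summand_cross[of i j r] that r by simp
    next
      case False
      then have "j < i" using \<open>i \<noteq> j\<close> by simp
      then show ?thesis using integral_summand_cross[of j i r] that r \<open>i \<noteq> j\<close> by (simp add: mult.commute)
    qed
  qed
  have "expectation (\<lambda>\<omega>. (simple_int r \<omega>)\<^sup>2) = (\<Sum>i<k. expectation (\<lambda>\<omega>. \<Sum>j<k. summand i r \<omega> * summand j r \<omega>))"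
    unfolding eq using r by (intro Bochner_Integration.integral_sum Bochner_Integration.integrable_sum integrable_summand_mult) auto
  also have "\<dots> = (\<Sum>i<k. \<Sum>j<k. expectation (\<lambda>\<omega>. summand i r \<omega> * summand j r \<omega>))"
    using r by (intro sum.cong refl Bochner_Integration.integral_sum integrable_summand_mult) auto
  also have "\<dots> = (\<Sum>i<k. \<Sum>j<k. (if i = j then expectation (\<lambda>\<omega>. (summand i r \<omega>)\<^sup>2) else 0))"
    using E0 by (intro sum.cong refl) auto
  also have "\<dots> = (\<Sum>i<k. expectation (\<lambda>\<omega>. (summand i r \<omega>)\<^sup>2))"
    by (simp add: sum.delta)
  also have "\<dots> = (\<Sum>i<k. expectation (\<lambda>\<omega>. (\<xi> i \<omega>)\<^sup>2) * (min r (tt (Suc i)) - min r (tt i)))"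
    using summand_measurable_square_moment(3) r by (intro sum.cong refl) auto
  finally show "expectation (\<lambda>\<omega>. (simple_int r \<omega>)\<^sup>2) = (\<Sum>i<k. expectation (\<lambda>\<omega>. (\<xi> i \<omega>)\<^sup>2) * (min r (tt (Suc i)) - min r (tt i)))" .
qed

lemma integral_simple_int_square_le:
  assumes r: "0 \<le> r"
  shows "expectation (\<lambda>\<omega>. (simple_int r \<omega>)\<^sup>2) \<le> (\<Sum>i<k. expectation (\<lambda>\<omega>. (\<xi> i \<omega>)\<^sup>2) * (tt (Suc i) - tt i))"
  unfolding simple_int_isometry(2)[OF r]
proof (intro sum_mono mult_left_mono)
  fix i assume "i \<in> {..<k}"
  then have "tt i < tt (Suc i)" using tt_less by simp
  then show "min r (tt (Suc i)) - min r (tt i) \<le> tt (Suc i) - tt i" by (simp add: min_def)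
  show "0 \<le> expectation (\<lambda>\<omega>. (\<xi> i \<omega>)\<^sup>2)" by simp
qed

lemma simple_int_increment:
  assumes r: "0 \<le> r" "r \<le> T"
  shows "simple_int T \<omega> - simple_int r \<omega> = (\<Sum>i<k. \<xi> i \<omega> * (W (tt (Suc i)) \<omega> - W (max (tt i) (min r (tt (Suc i)))) \<omega>))"
  unfolding simple_int_def sum_subtractf[symmetric]
proof (intro sum.cong refl)
  fix i assume "i \<in> {..<k}"
  then have i: "i < k" by simp
  have le: "tt (Suc i) \<le> T" "tt i \<le> T" using tt_le_T[of "Suc i"] tt_le_T[of i] i by auto
  have lt: "tt i < tt (Suc i)" using tt_less[OF i] .
  show "summand i T \<omega> - summand i r \<omega> = \<xi> i \<omega> * (W (tt (Suc i)) \<omega> - W (max (tt i) (min r (tt (Suc i)))) \<omega>)"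
    unfolding summand_def using le lt
    by (cases "r \<le> tt i"; cases "r \<le> tt (Suc i)") (auto simp: min_def max_def algebra_simps)
qed

lemma integral_mult_simple_int_increment:
  assumes r: "0 \<le> r" "r \<le> T" and Y: "Y \<in> borel_measurable (Filt r)" "integrable M (\<lambda>\<omega>. (Y \<omega>)\<^sup>2)"
  shows "integrable M (\<lambda>\<omega>. Y \<omega> * (simple_int T \<omega> - simple_int r \<omega>))"
    "expectation (\<lambda>\<omega>. Y \<omega> * (simple_int T \<omega> - simple_int r \<omega>)) = 0"
proof -
  define c where "c i = max (tt i) (min r (tt (Suc i)))" for i
  define g where "g i \<omega> = Y \<omega> * \<xi> i \<omega> * (W (tt (Suc i)) \<omega> - W (c i) \<omega>)" for i \<omega>
  have eq: "(\<lambda>\<omega>. Y \<omega> * (simple_int T \<omega> - simple_int r \<omega>)) = (\<lambda>\<omega>. \<Sum>i<k. g i \<omega>)"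
    unfolding simple_int_increment[OF r] g_def c_def by (simp add: sum_distrib_left mult_ac)
  have gi: "integrable M (g i) \<and> expectation (g i) = 0" if i: "i < k" for i
  proof (cases "r \<le> tt (Suc i)")
    case False
    then have "c i = tt (Suc i)" unfolding c_def using tt_less[OF i] by (simp add: min_def max_def)
    then have "g i = (\<lambda>\<omega>. 0)" unfolding g_def by simp
    then show ?thesis by simp
  next
    case True
    have ci: "0 \<le> c i" "c i \<le> tt (Suc i)" "r \<le> c i" "tt i \<le> c i"
      unfolding c_def using True tt_less[OF i] tt_nonneg[of i] i by (auto simp: min_def max_def)
    have Ym: "(\<lambda>\<omega>. Y \<omega> * \<xi> i \<omega>) \<in> borel_measurable (Filt (c i))"
      using measurable_Filt_mono[OF ci(3) Y(1)] measurable_Filt_mono[OF ci(4) \<xi>_measurable_Filt[OF i]] by measurable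
    have Yint: "integrable M (\<lambda>\<omega>. Y \<omega> * \<xi> i \<omega>)"
      using measurable_Filt_imp_measurable[OF Y(1)] \<xi>_measurable[OF i] Y(2) integrable_\<xi>_square[OF i] by (rule integrable_mult_square_integrable)
    show ?thesis unfolding g_def using integral_mult_increment[OF ci(1) ci(2) Ym Yint] by simp
  qed
  show "integrable M (\<lambda>\<omega>. Y \<omega> * (simple_int T \<omega> - simple_int r \<omega>))"
    unfolding eq using gi by (intro Bochner_Integration.integrable_sum) auto
  have "expectation (\<lambda>\<omega>. \<Sum>i<k. g i \<omega>) = (\<Sum>i<k. expectation (g i))"
    using gi by (intro Bochner_Integration.integral_sum) auto
  also have "\<dots> = 0" using gi by simp
  finally show "expectation (\<lambda>\<omega>. Y \<omega> * (simple_int T \<omega> - simple_int r \<omega>)) = 0" unfolding eq .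
qed

definition simple_proc :: "real \<Rightarrow> 'a \<Rightarrow> real" where
  "simple_proc t \<omega> = (\<Sum>i<k. \<xi> i \<omega> * indicator {tt i<..tt (Suc i)} t)"

lemma intervals_disjoint: "i < k \<Longrightarrow> j < k \<Longrightarrow> t \<in> {tt i<..tt (Suc i)} \<Longrightarrow> t \<in> {tt j<..tt (Suc j)} \<Longrightarrow> i = j"
proof (rule ccontr)
  assume a: "i < k" "j < k" "t \<in> {tt i<..tt (Suc i)}" "t \<in> {tt j<..tt (Suc j)}" "i \<noteq> j"
  show False
  proof (cases "i < j")
    case True
    then have "tt (Suc i) \<le> tt j" using tt_mono[of "Suc i" j] a by simp
    then show False using a by auto
  next
    case False
    then have "tt (Suc j) \<le> tt i" using tt_mono[of "Suc j" i] a by simp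
    then show False using a by auto
  qed
qed

lemma sum_square_indicator_le:
  "(\<Sum>i<k. ennreal ((\<xi> i \<omega>)\<^sup>2) * indicator {tt i<..tt (Suc i)} t) \<le> ennreal ((simple_proc t \<omega>)\<^sup>2) * indicator {0..T} t"
proof (cases "\<exists>i<k. t \<in> {tt i<..tt (Suc i)}")
  case False
  then have "(\<Sum>i<k. ennreal ((\<xi> i \<omega>)\<^sup>2) * indicator {tt i<..tt (Suc i)} t) = 0"
    by (intro sum.neutral) auto
  then show ?thesis by simp
next
  case True
  then obtain i0 where i0: "i0 < k" "t \<in> {tt i0<..tt (Suc i0)}" by blast
  have oth: "j < k \<Longrightarrow> j \<noteq> i0 \<Longrightarrow> t \<notin> {tt j<..tt (Suc j)}" for j using intervals_disjoint[OF i0(1) _ i0(2)] by blast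
  have "(\<Sum>i<k. ennreal ((\<xi> i \<omega>)\<^sup>2) * indicator {tt i<..tt (Suc i)} t) = ennreal ((\<xi> i0 \<omega>)\<^sup>2)"
    using i0 oth by (subst sum.remove[of _ i0]) (auto intro!: sum.neutral)
  moreover have "simple_proc t \<omega> = \<xi> i0 \<omega>"
    unfolding simple_proc_def using i0 oth by (subst sum.remove[of _ i0]) (auto intro!: sum.neutral)
  moreover have "t \<in> {0..T}" using i0 tt_nonneg[of i0] tt_le_T[of "Suc i0"] by auto
  ultimately show ?thesis by simp
qed

lemma simple_proc_measurable: "(\<lambda>(t, \<omega>). simple_proc t \<omega>) \<in> borel_measurable (lborel \<Otimes>\<^sub>M M)"
proof -
  have eq: "(\<lambda>(t, \<omega>). simple_proc t \<omega>) = (\<lambda>x. \<Sum>i<k. \<xi> i (snd x) * indicator {tt i<..tt (Suc i)} (fst x))"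
    by (auto simp: simple_proc_def fun_eq_iff)
  show ?thesis unfolding eq
  proof (intro borel_measurable_sum)
    fix i assume "i \<in> {..<k}"
    then have [measurable]: "\<xi> i \<in> borel_measurable M" by (simp add: \<xi>_measurable)
    show "(\<lambda>x. \<xi> i (snd x) * indicator {tt i<..tt (Suc i)} (fst x)) \<in> borel_measurable (lborel \<Otimes>\<^sub>M M)"
      by measurable
  qed
qed

lemma sum_le_nn_integral_simple_proc_square:
  "(\<Sum>i<k. ennreal (expectation (\<lambda>\<omega>. (\<xi> i \<omega>)\<^sup>2) * (tt (Suc i) - tt i)))
     \<le> proc_sq_norm M T simple_proc"
proof -
  have "(\<Sum>i<k. ennreal (expectation (\<lambda>\<omega>. (\<xi> i \<omega>)\<^sup>2) * (tt (Suc i) - tt i)))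
      = (\<Sum>i<k. (\<integral>\<^sup>+\<omega>. ennreal ((\<xi> i \<omega>)\<^sup>2) \<partial>M) * ennreal (tt (Suc i) - tt i))"
  proof (intro sum.cong refl)
    fix i assume "i \<in> {..<k}"
    then have i: "i < k" by simp
    have "(\<integral>\<^sup>+\<omega>. ennreal ((\<xi> i \<omega>)\<^sup>2) \<partial>M) = ennreal (expectation (\<lambda>\<omega>. (\<xi> i \<omega>)\<^sup>2))"
      using integrable_\<xi>_square[OF i] by (intro nn_integral_eq_integral) auto
    moreover have "0 \<le> expectation (\<lambda>\<omega>. (\<xi> i \<omega>)\<^sup>2)" by simp
    moreover have "0 \<le> tt (Suc i) - tt i" using tt_less[OF i] by simp
    ultimately show "ennreal (expectation (\<lambda>\<omega>. (\<xi> i \<omega>)\<^sup>2) * (tt (Suc i) - tt i)) =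
        (\<integral>\<^sup>+\<omega>. ennreal ((\<xi> i \<omega>)\<^sup>2) \<partial>M) * ennreal (tt (Suc i) - tt i)"
      by (simp add: ennreal_mult)
  qed
  also have "\<dots> = (\<Sum>i<k. (\<integral>\<^sup>+\<omega>. (\<integral>\<^sup>+t. ennreal ((\<xi> i \<omega>)\<^sup>2) * indicator {tt i<..tt (Suc i)} t \<partial>lborel) \<partial>M))"
  proof (intro sum.cong refl)
    fix i assume "i \<in> {..<k}"
    then have i: "i < k" by simp
    have "(\<lambda>\<omega>. (\<integral>\<^sup>+t. ennreal ((\<xi> i \<omega>)\<^sup>2) * indicator {tt i<..tt (Suc i)} t \<partial>lborel))
        = (\<lambda>\<omega>. ennreal ((\<xi> i \<omega>)\<^sup>2) * ennreal (tt (Suc i) - tt i))"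
      using tt_less[OF i] by (intro ext) (simp add: nn_integral_cmult_indicator)
    then show "(\<integral>\<^sup>+\<omega>. ennreal ((\<xi> i \<omega>)\<^sup>2) \<partial>M) * ennreal (tt (Suc i) - tt i) =
        (\<integral>\<^sup>+\<omega>. (\<integral>\<^sup>+t. ennreal ((\<xi> i \<omega>)\<^sup>2) * indicator {tt i<..tt (Suc i)} t \<partial>lborel) \<partial>M)"
      using \<xi>_measurable[OF i] by (simp add: nn_integral_multc)
  qed
  also have "\<dots> = (\<integral>\<^sup>+\<omega>. (\<Sum>i<k. (\<integral>\<^sup>+t. ennreal ((\<xi> i \<omega>)\<^sup>2) * indicator {tt i<..tt (Suc i)} t \<partial>lborel)) \<partial>M)"
  proof (rule nn_integral_sum[symmetric])
    fix i assume "i \<in> {..<k}"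
    then have i: "i < k" by simp
    have [measurable]: "\<xi> i \<in> borel_measurable M" using \<xi>_measurable[OF i] .
    show "(\<lambda>\<omega>. \<integral>\<^sup>+ t. ennreal ((\<xi> i \<omega>)\<^sup>2) * indicator {tt i<..tt (Suc i)} t \<partial>lborel) \<in> borel_measurable M"
      by measurable
  qed
  also have "\<dots> = (\<integral>\<^sup>+\<omega>. (\<integral>\<^sup>+t. (\<Sum>i<k. ennreal ((\<xi> i \<omega>)\<^sup>2) * indicator {tt i<..tt (Suc i)} t) \<partial>lborel) \<partial>M)"
    by (intro nn_integral_cong nn_integral_sum[symmetric]) auto
  also have "\<dots> \<le> proc_sq_norm M T simple_proc"
    unfolding proc_sq_norm_def by (intro nn_integral_mono sum_square_indicator_le)
  finally show ?thesis .
qed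

lemma nn_integral_simple_int_square_le:
  assumes r: "0 \<le> r"
  shows "(\<integral>\<^sup>+\<omega>. ennreal ((simple_int r \<omega>)\<^sup>2) \<partial>M) \<le> proc_sq_norm M T simple_proc"
proof -
  have "(\<integral>\<^sup>+\<omega>. ennreal ((simple_int r \<omega>)\<^sup>2) \<partial>M) = ennreal (expectation (\<lambda>\<omega>. (simple_int r \<omega>)\<^sup>2))"
    using simple_int_isometry(1)[OF r] by (intro nn_integral_eq_integral) auto
  also have "\<dots> \<le> ennreal (\<Sum>i<k. expectation (\<lambda>\<omega>. (\<xi> i \<omega>)\<^sup>2) * (tt (Suc i) - tt i))"
    using integral_simple_int_square_le[OF r] by (rule ennreal_leI)
  also have "\<dots> = (\<Sum>i<k. ennreal (expectation (\<lambda>\<omega>. (\<xi> i \<omega>)\<^sup>2) * (tt (Suc i) - tt i)))"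
  proof (rule sum_ennreal[symmetric])
    fix i assume "i \<in> {..<k}"
    then have "tt i < tt (Suc i)" using tt_less by simp
    then show "0 \<le> expectation (\<lambda>\<omega>. (\<xi> i \<omega>)\<^sup>2) * (tt (Suc i) - tt i)"
      by (intro mult_nonneg_nonneg) auto
  qed
  also have "\<dots> \<le> proc_sq_norm M T simple_proc"
    by (rule sum_le_nn_integral_simple_proc_square)
  finally show ?thesis .
qed

end

context brownian
begin

lemma simple_ito_isometry_orthogonality:
  assumes "simple_ito M W T S I"
  shows "\<And>r. 0 \<le> r \<Longrightarrow> I r \<in> borel_measurable M"
    "\<And>r. 0 \<le> r \<Longrightarrow> (\<integral>\<^sup>+\<omega>. ennreal ((I r \<omega>)\<^sup>2) \<partial>M) \<le> proc_sq_norm M T S"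
    "\<And>r Y. 0 \<le> r \<Longrightarrow> r \<le> T \<Longrightarrow> Y \<in> borel_measurable (Filt r) \<Longrightarrow> integrable M (\<lambda>\<omega>. (Y \<omega>)\<^sup>2) \<Longrightarrow>
        integrable M (\<lambda>\<omega>. Y \<omega> * (I T \<omega> - I r \<omega>)) \<and> expectation (\<lambda>\<omega>. Y \<omega> * (I T \<omega> - I r \<omega>)) = 0"
    "(\<lambda>(t, \<omega>). S t \<omega>) \<in> borel_measurable (lborel \<Otimes>\<^sub>M M)"
proof -
  obtain k tt \<xi> where H: "tt 0 = 0" "tt k = T" "\<forall>i<k. tt i < tt (Suc i)"
    "\<forall>i<k. \<xi> i \<in> borel_measurable M \<and>
           (\<forall>B \<in> sets (borel :: real measure). \<xi> i -` B \<inter> space M \<in> std_filtration M W (tt i)) \<and>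
           (\<integral>\<^sup>+ \<omega>. ennreal ((\<xi> i \<omega>)\<^sup>2) \<partial>M) < \<infinity>"
    "S = (\<lambda>t \<omega>. \<Sum>i<k. \<xi> i \<omega> * indicator {tt i<..tt (Suc i)} t)"
    "I = (\<lambda>t \<omega>. \<Sum>i<k. \<xi> i \<omega> * (W (min t (tt (Suc i))) \<omega> - W (min t (tt i)) \<omega>))"
    using assms unfolding simple_ito_def by blast
  interpret simple_process M W T k tt \<xi>
    using H by unfold_locales auto
  have S: "S = simple_proc" and I: "I = simple_int"
    unfolding H(5,6) simple_proc_def simple_int_def summand_def by simp_all
  show "\<And>r. 0 \<le> r \<Longrightarrow> I r \<in> borel_measurable M"
    unfolding I by (rule simple_int_measurable)
  show "\<And>r. 0 \<le> r \<Longrightarrow> (\<integral>\<^sup>+\<omega>. ennreal ((I r \<omega>)\<^sup>2) \<partial>M) \<le> proc_sq_norm M T S"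
    unfolding I S by (rule nn_integral_simple_int_square_le)
  show "\<And>r Y. 0 \<le> r \<Longrightarrow> r \<le> T \<Longrightarrow> Y \<in> borel_measurable (Filt r) \<Longrightarrow> integrable M (\<lambda>\<omega>. (Y \<omega>)\<^sup>2) \<Longrightarrow>
        integrable M (\<lambda>\<omega>. Y \<omega> * (I T \<omega> - I r \<omega>)) \<and> expectation (\<lambda>\<omega>. Y \<omega> * (I T \<omega> - I r \<omega>)) = 0"
    unfolding I using integral_mult_simple_int_increment by blast
  show "(\<lambda>(t, \<omega>). S t \<omega>) \<in> borel_measurable (lborel \<Otimes>\<^sub>M M)"
    unfolding S by (rule simple_proc_measurable)
qed

end

section \<open>The space of square-integrable adapted processes\<close>

(* Processes in HF are only jointly measurable on [0,T] x Omega; composing them with clamp T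
   gives jointly measurable processes on the whole line that agree with them on [0,T]. *)
definition clamp :: "real \<Rightarrow> real \<Rightarrow> real" where
  "clamp T t = max 0 (min T t)"

lemma clamp_in: "0 \<le> T \<Longrightarrow> clamp T t \<in> {0..T}"
  by (auto simp: clamp_def)

lemma clamp_id [simp]: "t \<in> {0..T} \<Longrightarrow> clamp T t = t"
  by (auto simp: clamp_def)

lemma measurable_clamp [measurable]: "clamp T \<in> borel_measurable borel"
  unfolding clamp_def by measurable

context brownian
begin

lemma HF_measurable_clamp:
  assumes "p \<in> HF M W T" "0 \<le> T"
  shows "(\<lambda>(t, \<omega>). p (clamp T t) \<omega>) \<in> borel_measurable (lborel \<Otimes>\<^sub>M M)"
proof -
  have "(\<lambda>z. (clamp T (fst z), snd z)) \<in> lborel \<Otimes>\<^sub>M M \<rightarrow>\<^sub>M restrict_space lborel {0..T} \<Otimes>\<^sub>M M"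
    using assms(2) clamp_in[of T] by (intro measurable_Pair measurable_restrict_space2) auto
  from measurable_compose[OF this, of "\<lambda>z. p (fst z) (snd z)"] show ?thesis
    using assms(1) unfolding HF_def by (simp add: split_beta')
qed

lemma HF_adapted: "p \<in> HF M W T \<Longrightarrow> t \<in> {0..T} \<Longrightarrow> p t \<in> borel_measurable (Filt t)"
  unfolding HF_def adapted_to_def measurable_Filt_iff by blast

lemma HF_measurable: "p \<in> HF M W T \<Longrightarrow> t \<in> {0..T} \<Longrightarrow> p t \<in> borel_measurable M"
  using HF_adapted measurable_Filt_imp_measurable by blast

lemma proc_sq_norm_HF: "p \<in> HF M W T \<Longrightarrow> proc_sq_norm M T p < \<infinity>"
  unfolding HF_def proc_sq_norm_def by blast

lemma HF_square_integrable:
  assumes "p \<in> HF M W T" "0 \<le> T"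
  shows "integrable (lborel \<Otimes>\<^sub>M M) (\<lambda>(t, \<omega>). (indicator {0..T} t * p (clamp T t) \<omega>)\<^sup>2)"
proof -
  interpret pair_sigma_finite lborel M ..
  have [measurable]: "(\<lambda>(t, \<omega>). p (clamp T t) \<omega>) \<in> borel_measurable (lborel \<Otimes>\<^sub>M M)"
    using assms by (rule HF_measurable_clamp)
  have "(\<integral>\<^sup>+z. ennreal (norm ((\<lambda>(t, \<omega>). (indicator {0..T} t * p (clamp T t) \<omega>)\<^sup>2) z)) \<partial>(lborel \<Otimes>\<^sub>M M))
      = proc_sq_norm M T (\<lambda>t \<omega>. p (clamp T t) \<omega>)"
    unfolding proc_sq_norm_def
    by (subst nn_integral_snd[symmetric]) (auto intro!: nn_integral_cong simp: split_beta' indicator_def)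
  also have "\<dots> = proc_sq_norm M T p"
    by (rule proc_sq_norm_cong) simp
  finally show ?thesis
    using proc_sq_norm_HF[OF assms(1)] by (subst integrable_iff_bounded) auto
qed

lemma integrable_indicator_interval_pair:
  fixes T :: real
  assumes "0 \<le> T"
  shows "integrable (lborel \<Otimes>\<^sub>M M) (\<lambda>(t, \<omega>). indicator {0..T} t :: real)"
proof -
  have "emeasure (lborel \<Otimes>\<^sub>M M) ({0..T} \<times> space M) = emeasure lborel {0..T} * emeasure M (space M)"
    by (rule emeasure_pair_measure_Times) auto
  then have "integrable (lborel \<Otimes>\<^sub>M M) (indicator ({0..T} \<times> space M) :: real \<times> 'a \<Rightarrow> real)"
    using assms by (intro integrable_real_indicator) (auto simp: emeasure_space_1)
  then show ?thesis
    by (rule Bochner_Integration.integrable_cong[THEN iffD1, rotated 2]) (auto simp: indicator_def space_pair_measure)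
qed

lemma proc_sq_norm_dominated:
  assumes dominated: "\<And>t \<omega>. t \<in> {0..T} \<Longrightarrow> (f t \<omega>)\<^sup>2 \<le> K * (1 + (p t \<omega>)\<^sup>2 + (q t \<omega>)\<^sup>2)"
    and HF: "p \<in> HF M W T" "q \<in> HF M W T" and T: "0 \<le> T"
  shows "proc_sq_norm M T f < \<infinity>"
proof -
  interpret P: pair_sigma_finite lborel M ..
  define F where "F = (\<lambda>(t, \<omega>). K * (indicator {0..T} t + (indicator {0..T} t * p (clamp T t) \<omega>)\<^sup>2
      + (indicator {0..T} t * q (clamp T t) \<omega>)\<^sup>2))"
  have F: "integrable (lborel \<Otimes>\<^sub>M M) F"
    unfolding F_def using integrable_indicator_interval_pair[OF T] HF_square_integrable[OF HF(1) T]
      HF_square_integrable[OF HF(2) T]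
    by (auto simp: split_beta')
  have "proc_sq_norm M T f \<le> (\<integral>\<^sup>+\<omega>. (\<integral>\<^sup>+t. ennreal (F (t, \<omega>)) \<partial>lborel) \<partial>M)"
    unfolding proc_sq_norm_def
  proof (intro nn_integral_mono)
    fix \<omega> t
    show "ennreal ((f t \<omega>)\<^sup>2) * indicator {0..T} t \<le> ennreal (F (t, \<omega>))"
      using dominated[of t \<omega>] by (cases "t \<in> {0..T}") (simp_all add: F_def ennreal_leI)
  qed
  also have "\<dots> = (\<integral>\<^sup>+z. ennreal (F z) \<partial>(lborel \<Otimes>\<^sub>M M))"
    using F by (intro P.nn_integral_snd) auto
  also have "\<dots> < \<infinity>"
  proof -
    have "0 \<le> K * (1 + (p 0 \<omega>)\<^sup>2 + (q 0 \<omega>)\<^sup>2)" for \<omega>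
      using dominated[of 0 \<omega>] T order_trans[OF zero_le_power2[of "f 0 \<omega>"]] by auto
    moreover have "0 < 1 + (p 0 \<omega>)\<^sup>2 + (q 0 \<omega>)\<^sup>2" for \<omega>
      by (simp add: add_pos_nonneg)
    ultimately have "0 \<le> K"
      by (meson zero_le_mult_iff not_less)
    then have "(\<integral>\<^sup>+z. ennreal (F z) \<partial>(lborel \<Otimes>\<^sub>M M)) = ennreal (integral\<^sup>L (lborel \<Otimes>\<^sub>M M) F)"
      using F by (intro nn_integral_eq_integral) (auto simp: F_def split_beta')
    then show ?thesis by simp
  qed
  finally show ?thesis .
qed

lemma HF_add:
  assumes HF: "p \<in> HF M W T" "q \<in> HF M W T" and T: "0 \<le> T"
  shows "(\<lambda>t \<omega>. p t \<omega> + q t \<omega>) \<in> HF M W T"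
  unfolding HF_def
proof (intro CollectI conjI)
  show "(\<lambda>(t, \<omega>). p t \<omega> + q t \<omega>) \<in> borel_measurable (restrict_space lborel {0..T} \<Otimes>\<^sub>M M)"
    using HF unfolding HF_def by (auto simp: split_beta')
  show "adapted_to M W T (\<lambda>t \<omega>. p t \<omega> + q t \<omega>)"
    using HF_adapted[OF HF(1)] HF_adapted[OF HF(2)]
    unfolding adapted_to_def measurable_Filt_iff[symmetric] by auto
  have "(p t \<omega> + q t \<omega>)\<^sup>2 \<le> 2 * (1 + (p t \<omega>)\<^sup>2 + (q t \<omega>)\<^sup>2)" for t \<omega>
    using sum_squares_bound[of "p t \<omega>" "q t \<omega>"] by (simp add: power2_sum)
  then show "(\<integral>\<^sup>+\<omega>. (\<integral>\<^sup>+t. ennreal ((p t \<omega> + q t \<omega>)\<^sup>2) * indicator {0..T} t \<partial>lborel) \<partial>M) < \<infinity>"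
    using proc_sq_norm_dominated[where f = "\<lambda>t \<omega>. p t \<omega> + q t \<omega>" and K = 2, OF _ HF T]
    unfolding proc_sq_norm_def by blast
qed

lemma HF_comp_linear_growth:
  fixes F :: "real \<Rightarrow> real \<Rightarrow> real"
  assumes F: "continuous_on UNIV (\<lambda>z. F (fst z) (snd z))" and growth: "\<And>x p. \<bar>F x p\<bar> \<le> C * (1 + \<bar>p\<bar>)"
    and HF: "X \<in> HF M W T" "P \<in> HF M W T" and T: "0 \<le> T"
  shows "(\<lambda>t \<omega>. F (X t \<omega>) (P t \<omega>)) \<in> HF M W T"
  unfolding HF_def
proof (intro CollectI conjI)
  have "(\<lambda>z. (X (fst z) (snd z), P (fst z) (snd z))) \<in> borel_measurable (restrict_space lborel {0..T} \<Otimes>\<^sub>M M)"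
    using HF unfolding HF_def by (auto simp: split_beta')
  from borel_measurable_continuous_on[OF F this]
  show "(\<lambda>(t, \<omega>). F (X t \<omega>) (P t \<omega>)) \<in> borel_measurable (restrict_space lborel {0..T} \<Otimes>\<^sub>M M)"
    by (simp add: split_beta')
  have "(\<lambda>\<omega>. F (X t \<omega>) (P t \<omega>)) \<in> borel_measurable (Filt t)" if "t \<in> {0..T}" for t
    using borel_measurable_continuous_on[OF F, of "\<lambda>\<omega>. (X t \<omega>, P t \<omega>)"]
      HF_adapted[OF HF(1) that] HF_adapted[OF HF(2) that] by simp
  then show "adapted_to M W T (\<lambda>t \<omega>. F (X t \<omega>) (P t \<omega>))"
    unfolding adapted_to_def measurable_Filt_iff[symmetric] by auto
  have "(F (X t \<omega>) (P t \<omega>))\<^sup>2 \<le> (2 * C\<^sup>2) * (1 + (P t \<omega>)\<^sup>2 + (P t \<omega>)\<^sup>2)" for t \<omega>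
  proof -
    have "(F (X t \<omega>) (P t \<omega>))\<^sup>2 \<le> (C * (1 + \<bar>P t \<omega>\<bar>))\<^sup>2"
      using growth[of "X t \<omega>" "P t \<omega>"] by (simp add: abs_le_square_iff[symmetric])
    also have "\<dots> \<le> C\<^sup>2 * (2 * (1 + (P t \<omega>)\<^sup>2))"
      using sum_squares_bound[of 1 "\<bar>P t \<omega>\<bar>"]
      by (simp add: power_mult_distrib power2_sum mult_left_mono)
    also have "\<dots> \<le> (2 * C\<^sup>2) * (1 + (P t \<omega>)\<^sup>2 + (P t \<omega>)\<^sup>2)"
      using zero_le_mult_iff[of "C\<^sup>2" "(P t \<omega>)\<^sup>2"] by (simp add: algebra_simps)
    finally show ?thesis .
  qed
  then show "(\<integral>\<^sup>+\<omega>. (\<integral>\<^sup>+t. ennreal ((F (X t \<omega>) (P t \<omega>))\<^sup>2) * indicator {0..T} t \<partial>lborel) \<partial>M) < \<infinity>"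
    using proc_sq_norm_dominated[where f = "\<lambda>t \<omega>. F (X t \<omega>) (P t \<omega>)" and K = "2 * C\<^sup>2", OF _ HF(2) HF(2) T]
    unfolding proc_sq_norm_def by blast
qed

lemma HF_section_square_integrable:
  assumes HF: "p \<in> HF M W T" and T: "0 \<le> T"
  shows "AE \<omega> in M. set_integrable lborel {0..T} (\<lambda>t. (p (clamp T t) \<omega>)\<^sup>2)"
proof -
  have [measurable]: "(\<lambda>(t, \<omega>). p (clamp T t) \<omega>) \<in> borel_measurable (lborel \<Otimes>\<^sub>M M)"
    using HF T by (rule HF_measurable_clamp)
  have "proc_sq_norm M T (\<lambda>t \<omega>. p (clamp T t) \<omega>) = proc_sq_norm M T p"
    by (rule proc_sq_norm_cong) simp
  then have "AE \<omega> in M. (\<integral>\<^sup>+t. ennreal ((p (clamp T t) \<omega>)\<^sup>2) * indicator {0..T} t \<partial>lborel) \<noteq> \<infinity>"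
    using proc_sq_norm_HF[OF HF] unfolding proc_sq_norm_def by (intro nn_integral_PInf_AE) auto
  then show ?thesis
  proof (rule AE_mp[OF _ AE_I2], intro impI)
    fix \<omega> assume "\<omega> \<in> space M"
      and finite: "(\<integral>\<^sup>+t. ennreal ((p (clamp T t) \<omega>)\<^sup>2) * indicator {0..T} t \<partial>lborel) \<noteq> \<infinity>"
    then have "(\<lambda>t. indicator {0..T} t *\<^sub>R (p (clamp T t) \<omega>)\<^sup>2) \<in> borel_measurable lborel"
      by measurable
    moreover have "(\<integral>\<^sup>+t. ennreal (norm (indicator {0..T} t *\<^sub>R (p (clamp T t) \<omega>)\<^sup>2)) \<partial>lborel)
        = (\<integral>\<^sup>+t. ennreal ((p (clamp T t) \<omega>)\<^sup>2) * indicator {0..T} t \<partial>lborel)"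
      by (intro nn_integral_cong) (auto simp: indicator_def)
    ultimately show "set_integrable lborel {0..T} (\<lambda>t. (p (clamp T t) \<omega>)\<^sup>2)"
      using finite unfolding set_integrable_def by (subst integrable_iff_bounded) (auto simp: top.not_eq_extremum)
  qed
qed

lemma integrable_HF_inner:
  assumes HF: "p \<in> HF M W T" "q \<in> HF M W T" and T: "0 \<le> T"
  shows "integrable M (\<lambda>\<omega>. LINT t:{0..T}|lborel. p t \<omega> * q t \<omega>)"
proof -
  interpret P: pair_sigma_finite lborel M ..
  have [measurable]: "(\<lambda>(t, \<omega>). p (clamp T t) \<omega>) \<in> borel_measurable (lborel \<Otimes>\<^sub>M M)"
    "(\<lambda>(t, \<omega>). q (clamp T t) \<omega>) \<in> borel_measurable (lborel \<Otimes>\<^sub>M M)"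
    using HF T by (auto intro: HF_measurable_clamp)
  have "integrable (lborel \<Otimes>\<^sub>M M)
      (\<lambda>(t, \<omega>). (indicator {0..T} t * p (clamp T t) \<omega>) * (indicator {0..T} t * q (clamp T t) \<omega>))"
    using HF_square_integrable[OF HF(1) T] HF_square_integrable[OF HF(2) T]
    unfolding split_beta' by (intro integrable_mult_square_integrable) (auto simp: split_beta')
  from P.integrable_snd[OF this] show ?thesis
    unfolding set_lebesgue_integral_def
    by (rule Bochner_Integration.integrable_cong[THEN iffD1, rotated 2])
      (auto intro!: Bochner_Integration.integral_cong simp: indicator_def)
qed

end

section \<open>Orthogonality of Ito increments\<close>

locale ito_version = brownian +
  fixes T :: real and Z I J :: "real \<Rightarrow> 'a \<Rightarrow> real"
  assumes T_nonneg: "0 \<le> T" and ito: "ito_integral M W T Z I" and Z_HF: "Z \<in> HF M W T"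
    and J_measurable: "(\<lambda>(t, \<omega>). J t \<omega>) \<in> borel_measurable (lborel \<Otimes>\<^sub>M M)"
    and J_version: "\<And>t. t \<in> {0..T} \<Longrightarrow> AE \<omega> in M. I t \<omega> = J t \<omega>"
begin

lemma measurable_J [measurable]: "J t \<in> borel_measurable M"
  using measurable_Pair2[OF J_measurable, of t] by simp

lemma simple_approximation:
  obtains Sn In where "\<And>n. simple_ito M W T (Sn n) (In n)"
    "(\<lambda>n. proc_sq_norm M T (\<lambda>t \<omega>. Sn n t \<omega> - Z (clamp T t) \<omega>)) \<longlonglongrightarrow> 0"
    "\<And>t. t \<in> {0..T} \<Longrightarrow> (\<lambda>n. \<integral>\<^sup>+\<omega>. ennreal ((In n t \<omega> - J t \<omega>)\<^sup>2) \<partial>M) \<longlonglongrightarrow> 0"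
proof -
  obtain Sn In where simple: "\<And>n. simple_ito M W T (Sn n) (In n)"
    and S: "(\<lambda>n. proc_sq_norm M T (\<lambda>t \<omega>. Sn n t \<omega> - Z t \<omega>)) \<longlonglongrightarrow> 0"
    and I: "\<And>t. t \<in> {0..T} \<Longrightarrow> (\<lambda>n. \<integral>\<^sup>+ \<omega>. ennreal ((In n t \<omega> - I t \<omega>)\<^sup>2) \<partial>M) \<longlonglongrightarrow> 0"
    using ito unfolding ito_integral_def proc_sq_norm_def by blast
  have "proc_sq_norm M T (\<lambda>t \<omega>. Sn n t \<omega> - Z (clamp T t) \<omega>) = proc_sq_norm M T (\<lambda>t \<omega>. Sn n t \<omega> - Z t \<omega>)" for n
    by (rule proc_sq_norm_cong) simp
  moreover have "(\<integral>\<^sup>+ \<omega>. ennreal ((In n t \<omega> - J t \<omega>)\<^sup>2) \<partial>M) = (\<integral>\<^sup>+ \<omega>. ennreal ((In n t \<omega> - I t \<omega>)\<^sup>2) \<partial>M)"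
    if "t \<in> {0..T}" for n t
    using J_version[OF that] by (intro nn_integral_cong_AE) auto
  ultimately show ?thesis
    using that[OF simple] S I by simp
qed

lemma nn_integral_J_square_bounded:
  obtains B where "B < \<infinity>" "\<And>r. r \<in> {0..T} \<Longrightarrow> (\<integral>\<^sup>+\<omega>. ennreal ((J r \<omega>)\<^sup>2) \<partial>M) \<le> B"
proof -
  obtain Sn In where simple: "\<And>n. simple_ito M W T (Sn n) (In n)"
    and S: "(\<lambda>n. proc_sq_norm M T (\<lambda>t \<omega>. Sn n t \<omega> - Z (clamp T t) \<omega>)) \<longlonglongrightarrow> 0"
    and I: "\<And>t. t \<in> {0..T} \<Longrightarrow> (\<lambda>n. \<integral>\<^sup>+\<omega>. ennreal ((In n t \<omega> - J t \<omega>)\<^sup>2) \<partial>M) \<longlonglongrightarrow> 0"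
    using simple_approximation by blast
  obtain N where N: "\<And>n. n \<ge> N \<Longrightarrow> proc_sq_norm M T (\<lambda>t \<omega>. Sn n t \<omega> - Z (clamp T t) \<omega>) < 1"
    using order_tendstoD(2)[OF S, of 1] unfolding eventually_sequentially by auto
  define B where "B = 2 + 2 * (2 + 2 * proc_sq_norm M T (\<lambda>t \<omega>. Z (clamp T t) \<omega>))"
  have "proc_sq_norm M T (\<lambda>t \<omega>. Z (clamp T t) \<omega>) = proc_sq_norm M T Z"
    by (rule proc_sq_norm_cong) simp
  then have "B < \<infinity>"
    using proc_sq_norm_HF[OF Z_HF] by (simp add: B_def ennreal_mult_less_top)
  moreover have "(\<integral>\<^sup>+\<omega>. ennreal ((J r \<omega>)\<^sup>2) \<partial>M) \<le> B" if r: "r \<in> {0..T}" for r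
  proof -
    obtain N' where N': "\<And>n. n \<ge> N' \<Longrightarrow> (\<integral>\<^sup>+\<omega>. ennreal ((In n r \<omega> - J r \<omega>)\<^sup>2) \<partial>M) < 1"
      using order_tendstoD(2)[OF I[OF r], of 1] unfolding eventually_sequentially by auto
    define n where "n = max N N'"
    have n: "n \<ge> N" "(\<integral>\<^sup>+\<omega>. ennreal ((In n r \<omega> - J r \<omega>)\<^sup>2) \<partial>M) < 1"
      using N'[of n] by (auto simp: n_def)
    have [measurable]: "In n r \<in> borel_measurable M"
      using simple_ito_isometry_orthogonality(1)[OF simple] r by auto
    have "proc_sq_norm M T (Sn n) \<le> 2 * proc_sq_norm M T (\<lambda>t \<omega>. Sn n t \<omega> - Z (clamp T t) \<omega>)
        + 2 * proc_sq_norm M T (\<lambda>t \<omega>. Z (clamp T t) \<omega>)"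
      by (rule proc_sq_norm_le[OF simple_ito_isometry_orthogonality(4)[OF simple] HF_measurable_clamp[OF Z_HF T_nonneg]])
    also have "\<dots> \<le> 2 + 2 * proc_sq_norm M T (\<lambda>t \<omega>. Z (clamp T t) \<omega>)"
      using mult_left_mono[OF less_imp_le[OF N[OF n(1)]], of 2] by (intro add_mono) auto
    finally have In_bound: "(\<integral>\<^sup>+\<omega>. ennreal ((In n r \<omega>)\<^sup>2) \<partial>M) \<le> 2 + 2 * proc_sq_norm M T (\<lambda>t \<omega>. Z (clamp T t) \<omega>)"
      using simple_ito_isometry_orthogonality(2)[OF simple, of r] r by (meson atLeastAtMost_iff order_trans)
    have "(\<integral>\<^sup>+\<omega>. ennreal ((J r \<omega>)\<^sup>2) \<partial>M)
        \<le> (\<integral>\<^sup>+\<omega>. 2 * ennreal ((In n r \<omega> - J r \<omega>)\<^sup>2) + 2 * ennreal ((In n r \<omega>)\<^sup>2) \<partial>M)"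
      using ennreal_square_le[of "J r _" "In n r _"] by (intro nn_integral_mono) (simp add: power2_commute)
    also have "\<dots> = 2 * (\<integral>\<^sup>+\<omega>. ennreal ((In n r \<omega> - J r \<omega>)\<^sup>2) \<partial>M) + 2 * (\<integral>\<^sup>+\<omega>. ennreal ((In n r \<omega>)\<^sup>2) \<partial>M)"
      by (simp add: nn_integral_add nn_integral_cmult)
    also have "\<dots> \<le> B"
      unfolding B_def using mult_left_mono[OF less_imp_le[OF n(2)], of 2] In_bound
      by (intro add_mono mult_left_mono) auto
    finally show ?thesis .
  qed
  ultimately show ?thesis using that by blast
qed

lemma integrable_J_square: "r \<in> {0..T} \<Longrightarrow> integrable M (\<lambda>\<omega>. (J r \<omega>)\<^sup>2)"
proof -
  assume r: "r \<in> {0..T}"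
  obtain B where "B < \<infinity>" "(\<integral>\<^sup>+\<omega>. ennreal ((J r \<omega>)\<^sup>2) \<partial>M) \<le> B"
    using nn_integral_J_square_bounded r by metis
  then show ?thesis
    by (subst integrable_iff_bounded) auto
qed

lemma integral_mult_J_increment:
  assumes r: "r \<in> {0..T}" and Y: "Y \<in> borel_measurable (Filt r)" "integrable M (\<lambda>\<omega>. (Y \<omega>)\<^sup>2)"
  shows "expectation (\<lambda>\<omega>. Y \<omega> * (J T \<omega> - J r \<omega>)) = 0"
proof -
  obtain Sn In where simple: "\<And>n. simple_ito M W T (Sn n) (In n)"
    and "(\<lambda>n. proc_sq_norm M T (\<lambda>t \<omega>. Sn n t \<omega> - Z (clamp T t) \<omega>)) \<longlonglongrightarrow> 0"
    and I: "\<And>t. t \<in> {0..T} \<Longrightarrow> (\<lambda>n. \<integral>\<^sup>+\<omega>. ennreal ((In n t \<omega> - J t \<omega>)\<^sup>2) \<partial>M) \<longlonglongrightarrow> 0"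
    using simple_approximation by blast
  have T: "T \<in> {0..T}" using r by auto
  have In_measurable [measurable]: "In n t \<in> borel_measurable M" if "t \<in> {0..T}" for n t
    using simple_ito_isometry_orthogonality(1)[OF simple] that by auto
  define e where "e n t = (\<integral>\<^sup>+\<omega>. ennreal ((In n t \<omega> - J t \<omega>)\<^sup>2) \<partial>M)" for n t
  have bound: "(\<integral>\<^sup>+\<omega>. ennreal (((In n T \<omega> - In n r \<omega>) - (J T \<omega> - J r \<omega>))\<^sup>2) \<partial>M) \<le> 2 * e n T + 2 * e n r" for n
  proof -
    have "ennreal (((In n T \<omega> - In n r \<omega>) - (J T \<omega> - J r \<omega>))\<^sup>2)
        \<le> 2 * ennreal ((In n T \<omega> - J T \<omega>)\<^sup>2) + 2 * ennreal ((In n r \<omega> - J r \<omega>)\<^sup>2)" for \<omega>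
      using ennreal_square_le[of "(In n T \<omega> - In n r \<omega>) - (J T \<omega> - J r \<omega>)" "J r \<omega> - In n r \<omega>"]
      by (simp add: power2_commute[of "J r \<omega>"])
    then have "(\<integral>\<^sup>+\<omega>. ennreal (((In n T \<omega> - In n r \<omega>) - (J T \<omega> - J r \<omega>))\<^sup>2) \<partial>M)
        \<le> (\<integral>\<^sup>+\<omega>. 2 * ennreal ((In n T \<omega> - J T \<omega>)\<^sup>2) + 2 * ennreal ((In n r \<omega> - J r \<omega>)\<^sup>2) \<partial>M)"
      by (rule nn_integral_mono)
    also have "\<dots> = 2 * e n T + 2 * e n r"
      using T r unfolding e_def by (simp add: nn_integral_add nn_integral_cmult)
    finally show ?thesis .
  qed
  have upper: "(\<lambda>n. 2 * e n T + 2 * e n r) \<longlonglongrightarrow> 2 * 0 + 2 * 0"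
    unfolding e_def by (intro tendsto_add ennreal_tendsto_cmult I T r) simp_all
  have lim: "(\<lambda>n. \<integral>\<^sup>+\<omega>. ennreal (((In n T \<omega> - In n r \<omega>) - (J T \<omega> - J r \<omega>))\<^sup>2) \<partial>M) \<longlonglongrightarrow> 0"
  proof (rule tendsto_sandwich[OF always_eventually always_eventually])
    show "\<forall>n. 0 \<le> (\<integral>\<^sup>+\<omega>. ennreal (((In n T \<omega> - In n r \<omega>) - (J T \<omega> - J r \<omega>))\<^sup>2) \<partial>M)"
      by simp
  qed (use bound upper in auto)
  show ?thesis
  proof (rule integral_mult_eq_0_L2_limit[OF _ Y(2) _ _ _ _ _ lim])
    show "Y \<in> borel_measurable M"
      using Y(1) by (rule measurable_Filt_imp_measurable)
    show "integrable M (\<lambda>\<omega>. (J T \<omega> - J r \<omega>)\<^sup>2)"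
      by (intro integrable_square_diff integrable_J_square T r measurable_J)
    show "integrable M (\<lambda>\<omega>. Y \<omega> * (In n T \<omega> - In n r \<omega>))" "expectation (\<lambda>\<omega>. Y \<omega> * (In n T \<omega> - In n r \<omega>)) = 0" for n
      using simple_ito_isometry_orthogonality(3)[OF simple, of r Y] r Y by auto
  qed (use T r in auto)
qed

lemma integrable_J_increment_square:
  "integrable (lborel \<Otimes>\<^sub>M M) (\<lambda>(t, \<omega>). (indicator {0..T} t * (J T \<omega> - J t \<omega>))\<^sup>2)"
proof -
  interpret P: pair_sigma_finite lborel M ..
  obtain B where B: "B < \<infinity>" "\<And>r. r \<in> {0..T} \<Longrightarrow> (\<integral>\<^sup>+\<omega>. ennreal ((J r \<omega>)\<^sup>2) \<partial>M) \<le> B"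
    using nn_integral_J_square_bounded by blast
  have [measurable]: "(\<lambda>(t, \<omega>). J t \<omega>) \<in> borel_measurable (lborel \<Otimes>\<^sub>M M)"
    by (rule J_measurable)
  have "(\<integral>\<^sup>+\<omega>. ennreal ((J T \<omega> - J t \<omega>)\<^sup>2) \<partial>M) \<le> 2 * B + 2 * B" if t: "t \<in> {0..T}" for t
  proof -
    have "(\<integral>\<^sup>+\<omega>. ennreal ((J T \<omega> - J t \<omega>)\<^sup>2) \<partial>M)
        \<le> (\<integral>\<^sup>+\<omega>. 2 * ennreal ((J T \<omega>)\<^sup>2) + 2 * ennreal ((J t \<omega>)\<^sup>2) \<partial>M)"
      using ennreal_square_le[of "J T \<omega> - J t \<omega>" "- J t \<omega>" for \<omega>] by (intro nn_integral_mono) simp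
    also have "\<dots> = 2 * (\<integral>\<^sup>+\<omega>. ennreal ((J T \<omega>)\<^sup>2) \<partial>M) + 2 * (\<integral>\<^sup>+\<omega>. ennreal ((J t \<omega>)\<^sup>2) \<partial>M)"
      by (simp add: nn_integral_add nn_integral_cmult)
    also have "\<dots> \<le> 2 * B + 2 * B"
      using B(2)[OF t] B(2)[of T] t by (intro add_mono mult_left_mono) auto
    finally show ?thesis .
  qed
  then have "(\<integral>\<^sup>+t. (\<integral>\<^sup>+\<omega>. ennreal ((indicator {0..T} t * (J T \<omega> - J t \<omega>))\<^sup>2) \<partial>M) \<partial>lborel)
      \<le> (\<integral>\<^sup>+t. (2 * B + 2 * B) * indicator {0..T} t \<partial>lborel)"
    by (intro nn_integral_mono) (auto simp: indicator_def)
  also have "\<dots> = (2 * B + 2 * B) * ennreal T"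
    using T_nonneg by (simp add: nn_integral_cmult_indicator)
  also have "\<dots> < \<infinity>"
    using B(1) by (simp add: ennreal_mult_less_top)
  finally have "(\<integral>\<^sup>+t. (\<integral>\<^sup>+\<omega>. ennreal ((indicator {0..T} t * (J T \<omega> - J t \<omega>))\<^sup>2) \<partial>M) \<partial>lborel) < \<infinity>" .
  moreover have "(\<integral>\<^sup>+t. (\<integral>\<^sup>+\<omega>. ennreal ((indicator {0..T} t * (J T \<omega> - J t \<omega>))\<^sup>2) \<partial>M) \<partial>lborel)
      = (\<integral>\<^sup>+z. ennreal ((indicator {0..T} (fst z) * (J T (snd z) - J (fst z) (snd z)))\<^sup>2) \<partial>(lborel \<Otimes>\<^sub>M M))"
  proof -
    have "(\<lambda>z. ennreal ((indicator {0..T} (fst z) * (J T (snd z) - J (fst z) (snd z)))\<^sup>2))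
        \<in> borel_measurable (lborel \<Otimes>\<^sub>M M)"
      by measurable
    from nn_integral_fst[OF this] show ?thesis by simp
  qed
  ultimately show ?thesis
    by (subst integrable_iff_bounded) (simp add: split_beta')
qed

lemma expectation_adapted_mult_J_increment:
  fixes \<delta> :: "real \<Rightarrow> 'a \<Rightarrow> real"
  assumes measurable: "(\<lambda>(t, \<omega>). \<delta> t \<omega>) \<in> borel_measurable (lborel \<Otimes>\<^sub>M M)"
    and adapted: "\<And>t. t \<in> {0..T} \<Longrightarrow> \<delta> t \<in> borel_measurable (Filt t)"
    and square_integrable: "integrable (lborel \<Otimes>\<^sub>M M) (\<lambda>(t, \<omega>). (indicator {0..T} t * \<delta> t \<omega>)\<^sup>2)"
  shows "integrable M (\<lambda>\<omega>. LBINT t. indicator {0..T} t * (\<delta> t \<omega> * (J T \<omega> - J t \<omega>)))"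
    and "expectation (\<lambda>\<omega>. LBINT t. indicator {0..T} t * (\<delta> t \<omega> * (J T \<omega> - J t \<omega>))) = 0"
proof -
  interpret P: pair_sigma_finite lborel M ..
  have [measurable]: "(\<lambda>(t, \<omega>). \<delta> t \<omega>) \<in> borel_measurable (lborel \<Otimes>\<^sub>M M)"
    "(\<lambda>(t, \<omega>). J t \<omega>) \<in> borel_measurable (lborel \<Otimes>\<^sub>M M)"
    using measurable J_measurable by auto
  have "integrable (lborel \<Otimes>\<^sub>M M) (\<lambda>z. (indicator {0..T} (fst z) * \<delta> (fst z) (snd z))
      * (indicator {0..T} (fst z) * (J T (snd z) - J (fst z) (snd z))))"
    using square_integrable integrable_J_increment_square
    by (intro integrable_mult_square_integrable) (auto simp: split_beta')
  then have prod: "integrable (lborel \<Otimes>\<^sub>M M) (\<lambda>(t, \<omega>). indicator {0..T} t * (\<delta> t \<omega> * (J T \<omega> - J t \<omega>)))"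
    by (rule Bochner_Integration.integrable_cong[THEN iffD1, rotated 2]) (auto simp: indicator_def)
  from P.integrable_snd[OF prod]
  show "integrable M (\<lambda>\<omega>. LBINT t. indicator {0..T} t * (\<delta> t \<omega> * (J T \<omega> - J t \<omega>)))"
    by simp
  have "expectation (\<lambda>\<omega>. LBINT t. indicator {0..T} t * (\<delta> t \<omega> * (J T \<omega> - J t \<omega>)))
      = (LBINT t. expectation (\<lambda>\<omega>. indicator {0..T} t * (\<delta> t \<omega> * (J T \<omega> - J t \<omega>))))"
    using P.Fubini_integral[OF prod] by simp
  also have "\<dots> = 0"
  proof (rule integral_eq_zero_AE)
    show "AE t in lborel. expectation (\<lambda>\<omega>. indicator {0..T} t * (\<delta> t \<omega> * (J T \<omega> - J t \<omega>))) = 0"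
      using P.AE_integrable_fst[OF square_integrable]
    proof eventually_elim
      case (elim t)
      show ?case
      proof (cases "t \<in> {0..T}")
        case True
        then show ?thesis
          using integral_mult_J_increment[OF True adapted[OF True]] elim by simp
      qed simp
    qed
  qed
  finally show "expectation (\<lambda>\<omega>. LBINT t. indicator {0..T} t * (\<delta> t \<omega> * (J T \<omega> - J t \<omega>))) = 0" .
qed

end

section \<open>Pathwise comparison of costs\<close>

context lagrangian
begin

lemma nn_integral_L_le_tangent:
  fixes X Y u v p \<Delta> :: "real \<Rightarrow> real"
  assumes [measurable]: "X \<in> borel_measurable borel" "Y \<in> borel_measurable borel"
    "u \<in> borel_measurable borel" "v \<in> borel_measurable borel" and S: "S \<in> sets lborel"
    and u: "\<And>t. t \<in> S \<Longrightarrow> u t = opt_ctrl (X t) (p t)" and Y: "\<And>t. t \<in> S \<Longrightarrow> Y t = X t + \<Delta> t"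
    and integrable: "set_integrable lborel S (\<lambda>t. p t * (v t - u t) + Ham_x L (X t) (p t) * \<Delta> t)"
  shows "enn2ereal (\<integral>\<^sup>+t. ennreal (L (X t) (u t)) * indicator S t \<partial>lborel)
      + ereal (- (LINT t:S|lborel. p t * (v t - u t) + Ham_x L (X t) (p t) * \<Delta> t))
    \<le> enn2ereal (\<integral>\<^sup>+t. ennreal (L (Y t) (v t)) * indicator S t \<partial>lborel)"
proof -
  have "L (X t) (u t) + - (p t * (v t - u t) + Ham_x L (X t) (p t) * \<Delta> t) \<le> L (Y t) (v t)" if "t \<in> S" for t
    using L_ge_tangent[of "X t" "p t" "Y t" "v t"] u[OF that] Y[OF that] by (simp add: algebra_simps)
  from set_nn_integral_plus_set_integral_le[where f = "\<lambda>t. L (X t) (u t)" and f' = "\<lambda>t. L (Y t) (v t)"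
      and g = "\<lambda>t. - (p t * (v t - u t) + Ham_x L (X t) (p t) * \<Delta> t)", OF _ _ S _ this L_nonneg]
  show ?thesis
    using set_integrable_mult_right[of "-1", OF integrable] set_integral_uminus[OF integrable] by simp
qed

end

locale control_problem = lagrangian +
  fixes \<Psi> :: "real \<Rightarrow> real"
  assumes \<Psi>_C1: "\<Psi> C1_differentiable_on UNIV"
    and \<Psi>_nonneg: "\<And>x. \<Psi> x \<ge> 0"
    and \<Psi>_convex: "convex_on UNIV \<Psi>"
begin

lemma \<Psi>_has_derivative: "(\<Psi> has_real_derivative deriv \<Psi> x) (at x)"
proof -
  obtain D where "\<And>x. (\<Psi> has_vector_derivative D x) (at x)"
    using \<Psi>_C1 unfolding C1_differentiable_on_def by blast
  then have "(\<Psi> has_real_derivative D x) (at x)"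
    by (simp add: has_real_derivative_iff_has_vector_derivative)
  moreover from this have "deriv \<Psi> x = D x"
    by (rule DERIV_imp_deriv)
  ultimately show ?thesis by simp
qed

lemma \<Psi>_ge_tangent: "\<Psi> x + deriv \<Psi> x * (y - x) \<le> \<Psi> y"
  using convex_on_imp_above_tangent[OF \<Psi>_convex _ _ _ \<Psi>_has_derivative[of x, THEN has_field_derivative_at_within], of y]
  by simp

lemma measurable_\<Psi> [measurable]: "\<Psi> \<in> borel_measurable borel"
  using \<Psi>_has_derivative
  by (intro borel_measurable_continuous_onI continuous_at_imp_continuous_on ballI DERIV_isCont) auto

definition path_cost :: "real \<Rightarrow> real \<Rightarrow> (real \<Rightarrow> real) \<Rightarrow> ennreal" where
  "path_cost T x0 v = (\<integral>\<^sup>+t. ennreal (L (x0 + (LINT s:{0..t}|lborel. v s)) (v t)) * indicator {0..T} t \<partial>lborel)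
     + ennreal (\<Psi> (x0 + (LINT s:{0..T}|lborel. v s)))"

lemma path_cost_cong:
  assumes "\<And>t. t \<in> {0..T} \<Longrightarrow> v t = v' t"
  shows "path_cost T x0 v = path_cost T x0 v'"
proof -
  have "(LINT s:{0..t}|lborel. v s) = (LINT s:{0..t}|lborel. v' s)" if "t \<le> T" for t
    using assms that by (intro set_lebesgue_integral_cong) auto
  then show ?thesis
    unfolding path_cost_def using assms
    by (intro arg_cong2[where f = "(+)"] nn_integral_cong) (auto simp: indicator_def)
qed

lemma pathwise_cost_comparison:
  fixes T x_init :: real and v u \<theta> P X :: "real \<Rightarrow> real"
  defines "h \<equiv> \<lambda>t. Ham_x L (X t) (P t + \<theta> t)"
    and "A \<equiv> \<lambda>t. LINT s:{0..t}|lborel. Ham_x L (X s) (P s + \<theta> s)"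
  assumes meas [measurable]: "v \<in> borel_measurable borel" "u \<in> borel_measurable borel"
    "\<theta> \<in> borel_measurable borel" "P \<in> borel_measurable borel" "X \<in> borel_measurable borel"
    and u: "\<And>t. t \<in> {0..T} \<Longrightarrow> u t = opt_ctrl (X t) (P t + \<theta> t)"
    and square_integrable: "set_integrable lborel {0..T} (\<lambda>t. (v t)\<^sup>2)" "set_integrable lborel {0..T} (\<lambda>t. (u t)\<^sup>2)"
      "set_integrable lborel {0..T} (\<lambda>t. (\<theta> t)\<^sup>2)" "set_integrable lborel {0..T} (\<lambda>t. (P t)\<^sup>2)"
    and h_integrable: "set_integrable lborel {0..T} h"
    and X_eq: "\<And>t. t \<in> {0..T} \<Longrightarrow> X t = x_init + (LINT s:{0..t}|lborel. u s)"
    and P_T: "P T = deriv \<Psi> (X T)" and T: "0 \<le> T"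
  shows "enn2ereal (path_cost T x_init u)
      + ereal ((LINT t:{0..T}|lborel. \<theta> t * u t) - (LINT t:{0..T}|lborel. \<theta> t * v t)
        + (LINT t:{0..T}|lborel. (v t - u t) * ((P T - A T) - (P t - A t))))
    \<le> enn2ereal (path_cost T x_init v)"
proof -
  define xv where "xv t = x_init + (LINT s:{0..t}|lborel. v s)" for t
  have cost_u: "path_cost T x_init u = (\<integral>\<^sup>+t. ennreal (L (X t) (u t)) * indicator {0..T} t \<partial>lborel) + ennreal (\<Psi> (X T))"
    unfolding path_cost_def using X_eq T
    by (intro arg_cong2[where f = "(+)"] nn_integral_cong) (auto simp: indicator_def)
  have cost_v: "path_cost T x_init v = (\<integral>\<^sup>+t. ennreal (L (xv t) (v t)) * indicator {0..T} t \<partial>lborel) + ennreal (\<Psi> (xv T))"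
    unfolding path_cost_def xv_def ..
  have xv_meas [measurable]: "xv \<in> borel_measurable borel"
    unfolding xv_def by measurable
  have sbm: "set_borel_measurable lborel {0..T} f" if "f \<in> borel_measurable borel" for f :: "real \<Rightarrow> real"
    using that unfolding set_borel_measurable_def by measurable
  have finite: "emeasure lborel {0..T} < \<infinity>"
    using T by simp
  note L1 = set_integrable_of_square[OF sbm _ _ finite]
  note L2_prod = set_integrable_mult_of_squares[OF sbm sbm]
  define \<delta> where "\<delta> t = v t - u t" for t
  define D where "D t = (LINT s:{0..t}|lborel. \<delta> s)" for t
  have v_int: "set_integrable lborel {0..T} v" and u_int: "set_integrable lborel {0..T} u"
    using L1 square_integrable by auto
  have \<delta>_int: "set_integrable lborel {0..T} \<delta>"
    unfolding \<delta>_def using v_int u_int by (rule set_integral_diff)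
  have \<theta>v: "set_integrable lborel {0..T} (\<lambda>t. \<theta> t * v t)" and \<theta>u: "set_integrable lborel {0..T} (\<lambda>t. \<theta> t * u t)"
    and Pv: "set_integrable lborel {0..T} (\<lambda>t. P t * v t)" and Pu: "set_integrable lborel {0..T} (\<lambda>t. P t * u t)"
    using L2_prod square_integrable by auto
  have P\<delta>: "set_integrable lborel {0..T} (\<lambda>t. P t * \<delta> t)"
    using set_integral_diff(1)[OF Pv Pu] by (simp add: \<delta>_def right_diff_distrib)
  have D_eq: "D t = xv t - X t" if "t \<in> {0..T}" for t
  proof -
    have "set_integrable lborel {0..t} v" "set_integrable lborel {0..t} u"
      using that by (auto intro: set_integrable_subset[OF v_int] set_integrable_subset[OF u_int])
    then show ?thesis
      using that by (simp add: D_def \<delta>_def xv_def X_eq set_integral_diff)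
  qed
  have "A t = (LINT s:{0..t}|lborel. h s)" for t
    by (simp add: A_def h_def)
  note product_rule = set_integral_product_rule[OF \<delta>_int h_integrable P\<delta>, folded D_def this]
  have \<theta>\<delta>: "set_integrable lborel {0..T} (\<lambda>t. \<theta> t * \<delta> t)"
    using set_integral_diff(1)[OF \<theta>v \<theta>u] by (simp add: \<delta>_def right_diff_distrib)
  have "(\<lambda>t. (P t + \<theta> t) * (v t - u t) + h t * D t) = (\<lambda>t. (P t * \<delta> t + h t * D t) + \<theta> t * \<delta> t)"
    by (simp add: fun_eq_iff \<delta>_def algebra_simps)
  with set_integral_add[OF set_integral_add(1)[OF P\<delta> product_rule(1)] \<theta>\<delta>]
  have integrable: "set_integrable lborel {0..T} (\<lambda>t. (P t + \<theta> t) * (v t - u t) + h t * D t)"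
    and integral: "(LINT t:{0..T}|lborel. (P t + \<theta> t) * (v t - u t) + h t * D t)
      = (LINT t:{0..T}|lborel. P t * \<delta> t + h t * D t) + (LINT t:{0..T}|lborel. \<theta> t * \<delta> t)"
    by simp_all
  have "xv t = X t + D t" if "t \<in> {0..T}" for t
    using D_eq[OF that] by simp
  from nn_integral_L_le_tangent[OF meas(5) xv_meas meas(2) meas(1) _ u this integrable[unfolded h_def]]
  have running_cost: "enn2ereal (\<integral>\<^sup>+t. ennreal (L (X t) (u t)) * indicator {0..T} t \<partial>lborel)
      + ereal (- ((LINT t:{0..T}|lborel. P t * \<delta> t + h t * D t) + (LINT t:{0..T}|lborel. \<theta> t * \<delta> t)))
      \<le> enn2ereal (\<integral>\<^sup>+t. ennreal (L (xv t) (v t)) * indicator {0..T} t \<partial>lborel)"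
    using integral by (simp add: h_def)
  have terminal_cost: "\<Psi> (X T) + P T * D T \<le> \<Psi> (xv T)"
    using \<Psi>_ge_tangent[of "X T" "xv T"] D_eq[of T] T P_T by simp
  have "(LINT t:{0..T}|lborel. \<theta> t * u t) - (LINT t:{0..T}|lborel. \<theta> t * v t)
      + (LINT t:{0..T}|lborel. (v t - u t) * ((P T - A T) - (P t - A t)))
      = - ((LINT t:{0..T}|lborel. P t * \<delta> t + h t * D t) + (LINT t:{0..T}|lborel. \<theta> t * \<delta> t)) + P T * D T"
    using product_rule(2) \<theta>v \<theta>u by (simp add: \<delta>_def right_diff_distrib)
  with enn2ereal_plus_ereal_le_add[OF running_cost terminal_cost \<Psi>_nonneg \<Psi>_nonneg] show ?thesis
    unfolding cost_u cost_v by simp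
qed

lemma measurable_path_cost:
  fixes u :: "real \<Rightarrow> 'b \<Rightarrow> real"
  assumes [measurable]: "(\<lambda>(t, \<omega>). u t \<omega>) \<in> borel_measurable (lborel \<Otimes>\<^sub>M N)"
  shows "(\<lambda>\<omega>. path_cost T x0 (\<lambda>t. u t \<omega>)) \<in> borel_measurable N"
  unfolding path_cost_def by measurable

end

section \<open>Optimality of the FBSDE control\<close>

locale fbsde_solution = control_problem L L' \<alpha> \<beta> \<Psi> + brownian M W
  for L L' \<alpha> \<beta> \<Psi> and M :: "'a measure" and W +
  fixes T x0 C :: real and \<theta> X P Z I :: "real \<Rightarrow> 'a \<Rightarrow> real"
  assumes T_pos: "T > 0"
    and Ham_p_growth: "\<And>x p. \<bar>Ham_p L x p\<bar> \<le> C * (1 + \<bar>p\<bar>)"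
    and HF: "\<theta> \<in> HF M W T" "X \<in> HF M W T" "P \<in> HF M W T" "Z \<in> HF M W T"
    and forward: "AE \<omega> in M. \<forall>t\<in>{0..T}.
                set_integrable lborel {0..t} (\<lambda>s. Ham_p L (X s \<omega>) (P s \<omega> + \<theta> s \<omega>)) \<and>
                X t \<omega> = x0 - (LINT s:{0..t}|lborel. Ham_p L (X s \<omega>) (P s \<omega> + \<theta> s \<omega>))"
    and ito: "ito_integral M W T Z I"
    and backward: "\<forall>t\<in>{0..T}. AE \<omega> in M.
                   set_integrable lborel {0..t} (\<lambda>s. Ham_x L (X s \<omega>) (P s \<omega> + \<theta> s \<omega>)) \<and>
                   P t \<omega> = P 0 \<omega> + (LINT s:{0..t}|lborel. Ham_x L (X s \<omega>) (P s \<omega> + \<theta> s \<omega>)) + I t \<omega>"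
    and terminal: "AE \<omega> in M. P T \<omega> = deriv \<Psi> (X T \<omega>)"
begin

definition opt_proc :: "real \<Rightarrow> 'a \<Rightarrow> real" where
  "opt_proc t \<omega> = opt_ctrl (X t \<omega>) (P t \<omega> + \<theta> t \<omega>)"

lemma opt_proc_eq: "opt_proc = (\<lambda>t \<omega>. - Ham_p L (X t \<omega>) (P t \<omega> + \<theta> t \<omega>))"
  by (simp add: opt_proc_def Ham_p_eq fun_eq_iff)

lemma opt_proc_HF: "opt_proc \<in> HF M W T"
proof -
  have "(\<lambda>t \<omega>. P t \<omega> + \<theta> t \<omega>) \<in> HF M W T"
    using HF T_pos by (intro HF_add) auto
  moreover have "\<bar>opt_ctrl x p\<bar> \<le> C * (1 + \<bar>p\<bar>)" for x p
    using Ham_p_growth[of x p] by (simp add: Ham_p_eq)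
  ultimately show ?thesis
    unfolding opt_proc_def
    using HF_comp_linear_growth[OF continuous_on_opt_ctrl _ HF(2) _ less_imp_le[OF T_pos]] by blast
qed

definition drift :: "real \<Rightarrow> 'a \<Rightarrow> real" where
  "drift t \<omega> = (LINT s:{0..t}|lborel. Ham_x L (X (clamp T s) \<omega>) (P (clamp T s) \<omega> + \<theta> (clamp T s) \<omega>))"

(* By the backward equation, martingale_part is a jointly measurable version of the Ito integral I. *)
definition martingale_part :: "real \<Rightarrow> 'a \<Rightarrow> real" where
  "martingale_part t \<omega> = P (clamp T t) \<omega> - P 0 \<omega> - drift t \<omega>"

lemma drift_eq:
  "t \<in> {0..T} \<Longrightarrow> drift t \<omega> = (LINT s:{0..t}|lborel. Ham_x L (X s \<omega>) (P s \<omega> + \<theta> s \<omega>))"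
  unfolding drift_def by (intro set_lebesgue_integral_cong) auto

lemma measurable_HF_clamp [measurable]:
  "(\<lambda>(t, \<omega>). \<theta> (clamp T t) \<omega>) \<in> borel_measurable (lborel \<Otimes>\<^sub>M M)"
  "(\<lambda>(t, \<omega>). X (clamp T t) \<omega>) \<in> borel_measurable (lborel \<Otimes>\<^sub>M M)"
  "(\<lambda>(t, \<omega>). P (clamp T t) \<omega>) \<in> borel_measurable (lborel \<Otimes>\<^sub>M M)"
  "(\<lambda>(t, \<omega>). opt_proc (clamp T t) \<omega>) \<in> borel_measurable (lborel \<Otimes>\<^sub>M M)"
  using HF opt_proc_HF T_pos by (auto intro: HF_measurable_clamp)

lemma martingale_part_increment:
  "martingale_part T \<omega> - martingale_part t \<omega> = (P (clamp T T) \<omega> - drift T \<omega>) - (P (clamp T t) \<omega> - drift t \<omega>)"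
  by (simp add: martingale_part_def)

lemma ito_version_martingale_part: "ito_version M W T Z I martingale_part"
proof
  show "0 \<le> T" "ito_integral M W T Z I" "Z \<in> HF M W T"
    using T_pos ito HF by auto
  have [measurable]: "P 0 \<in> borel_measurable M"
    using HF_measurable[OF HF(3)] T_pos by simp
  show "(\<lambda>(t, \<omega>). martingale_part t \<omega>) \<in> borel_measurable (lborel \<Otimes>\<^sub>M M)"
    unfolding martingale_part_def drift_def by measurable
  show "AE \<omega> in M. I t \<omega> = martingale_part t \<omega>" if t: "t \<in> {0..T}" for t
  proof -
    have "AE \<omega> in M. P t \<omega> = P 0 \<omega> + (LINT s:{0..t}|lborel. Ham_x L (X s \<omega>) (P s \<omega> + \<theta> s \<omega>)) + I t \<omega>"
      using backward t by auto
    then show ?thesis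
      by eventually_elim (simp add: martingale_part_def drift_eq[OF t] clamp_id[OF t])
  qed
qed

lemma martingale_term:
  assumes v: "v \<in> HF M W T"
  shows "integrable M (\<lambda>\<omega>. LINT t:{0..T}|lborel. (v t \<omega> - opt_proc t \<omega>) * (martingale_part T \<omega> - martingale_part t \<omega>))"
    and "expectation (\<lambda>\<omega>. LINT t:{0..T}|lborel. (v t \<omega> - opt_proc t \<omega>) * (martingale_part T \<omega> - martingale_part t \<omega>)) = 0"
proof -
  interpret ito_version M W T Z I martingale_part
    by (rule ito_version_martingale_part)
  define \<delta> where "\<delta> t \<omega> = v (clamp T t) \<omega> - opt_proc (clamp T t) \<omega>" for t \<omega>
  have [measurable]: "(\<lambda>(t, \<omega>). v (clamp T t) \<omega>) \<in> borel_measurable (lborel \<Otimes>\<^sub>M M)"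
    using v T_nonneg by (rule HF_measurable_clamp)
  have "(\<lambda>(t, \<omega>). \<delta> t \<omega>) \<in> borel_measurable (lborel \<Otimes>\<^sub>M M)"
    unfolding \<delta>_def by measurable
  moreover have "\<delta> t \<in> borel_measurable (Filt t)" if "t \<in> {0..T}" for t
  proof -
    have "\<delta> t = (\<lambda>\<omega>. v t \<omega> - opt_proc t \<omega>)"
      using that by (simp add: \<delta>_def fun_eq_iff)
    then show ?thesis
      using HF_adapted[OF v that] HF_adapted[OF opt_proc_HF that] by simp
  qed
  moreover have "integrable (lborel \<Otimes>\<^sub>M M) (\<lambda>(t, \<omega>). (indicator {0..T} t * \<delta> t \<omega>)\<^sup>2)"
    using HF_square_integrable[OF v T_nonneg] HF_square_integrable[OF opt_proc_HF T_nonneg]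
    unfolding \<delta>_def split_beta' right_diff_distrib
    by (intro integrable_square_diff) (auto simp: split_beta')
  moreover have "(LBINT t. indicator {0..T} t * (\<delta> t \<omega> * (martingale_part T \<omega> - martingale_part t \<omega>)))
      = (LINT t:{0..T}|lborel. (v t \<omega> - opt_proc t \<omega>) * (martingale_part T \<omega> - martingale_part t \<omega>))" for \<omega>
    unfolding set_lebesgue_integral_def \<delta>_def
    by (intro Bochner_Integration.integral_cong) (auto simp: indicator_def)
  ultimately show "integrable M (\<lambda>\<omega>. LINT t:{0..T}|lborel. (v t \<omega> - opt_proc t \<omega>) * (martingale_part T \<omega> - martingale_part t \<omega>))"
    and "expectation (\<lambda>\<omega>. LINT t:{0..T}|lborel. (v t \<omega> - opt_proc t \<omega>) * (martingale_part T \<omega> - martingale_part t \<omega>)) = 0"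
    using expectation_adapted_mult_J_increment[of \<delta>] by simp_all
qed

lemma pathwise_comparison_clamped:
  assumes v: "v \<in> HF M W T" and \<omega>: "\<omega> \<in> space M"
    and squares: "set_integrable lborel {0..T} (\<lambda>t. (v (clamp T t) \<omega>)\<^sup>2)"
      "set_integrable lborel {0..T} (\<lambda>t. (opt_proc (clamp T t) \<omega>)\<^sup>2)"
      "set_integrable lborel {0..T} (\<lambda>t. (\<theta> (clamp T t) \<omega>)\<^sup>2)"
      "set_integrable lborel {0..T} (\<lambda>t. (P (clamp T t) \<omega>)\<^sup>2)"
    and h: "set_integrable lborel {0..T} (\<lambda>s. Ham_x L (X s \<omega>) (P s \<omega> + \<theta> s \<omega>))"
    and terminal: "P T \<omega> = deriv \<Psi> (X T \<omega>)"
    and forward: "\<forall>t\<in>{0..T}. set_integrable lborel {0..t} (\<lambda>s. Ham_p L (X s \<omega>) (P s \<omega> + \<theta> s \<omega>)) \<and>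
      X t \<omega> = x0 - (LINT s:{0..t}|lborel. Ham_p L (X s \<omega>) (P s \<omega> + \<theta> s \<omega>))"
  shows "enn2ereal (path_cost T x0 (\<lambda>t. opt_proc (clamp T t) \<omega>))
      + ereal ((LINT t:{0..T}|lborel. \<theta> (clamp T t) \<omega> * opt_proc (clamp T t) \<omega>)
        - (LINT t:{0..T}|lborel. \<theta> (clamp T t) \<omega> * v (clamp T t) \<omega>)
        + (LINT t:{0..T}|lborel. (v (clamp T t) \<omega> - opt_proc (clamp T t) \<omega>) * (martingale_part T \<omega> - martingale_part t \<omega>)))
      \<le> enn2ereal (path_cost T x0 (\<lambda>t. v (clamp T t) \<omega>))"
proof -
  have T: "0 \<le> T"
    using T_pos by simp
  have [measurable]: "(\<lambda>(t, \<omega>). v (clamp T t) \<omega>) \<in> borel_measurable (lborel \<Otimes>\<^sub>M M)"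
    using v T by (rule HF_measurable_clamp)
  have measurable: "(\<lambda>t. v (clamp T t) \<omega>) \<in> borel_measurable borel"
    "(\<lambda>t. opt_proc (clamp T t) \<omega>) \<in> borel_measurable borel" "(\<lambda>t. \<theta> (clamp T t) \<omega>) \<in> borel_measurable borel"
    "(\<lambda>t. P (clamp T t) \<omega>) \<in> borel_measurable borel" "(\<lambda>t. X (clamp T t) \<omega>) \<in> borel_measurable borel"
    using \<omega> by measurable
  have "opt_proc (clamp T t) \<omega> = opt_ctrl (X (clamp T t) \<omega>) (P (clamp T t) \<omega> + \<theta> (clamp T t) \<omega>)" for t
    by (simp add: opt_proc_def)
  moreover have "set_integrable lborel {0..T} (\<lambda>s. Ham_x L (X (clamp T s) \<omega>) (P (clamp T s) \<omega> + \<theta> (clamp T s) \<omega>))"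
    using h by (rule set_integrable_cong[THEN iffD1, rotated -1]) auto
  moreover have "X (clamp T t) \<omega> = x0 + (LINT s:{0..t}|lborel. opt_proc (clamp T s) \<omega>)" if "t \<in> {0..T}" for t
  proof -
    have "(LINT s:{0..t}|lborel. opt_proc (clamp T s) \<omega>) = (LINT s:{0..t}|lborel. - Ham_p L (X s \<omega>) (P s \<omega> + \<theta> s \<omega>))"
      using that by (intro set_lebesgue_integral_cong) (auto simp: opt_proc_eq)
    then show ?thesis
      using forward that by (simp add: set_lebesgue_integral_def)
  qed
  moreover have "P (clamp T T) \<omega> = deriv \<Psi> (X (clamp T T) \<omega>)"
    using terminal T by simp
  ultimately show ?thesis
    using pathwise_cost_comparison[OF measurable _ squares, folded drift_def] T
    unfolding martingale_part_increment by blast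
qed

lemma pathwise_comparison_AE:
  assumes v: "v \<in> HF M W T"
  shows "AE \<omega> in M. enn2ereal (path_cost T x0 (\<lambda>t. opt_proc t \<omega>))
      + ereal ((LINT t:{0..T}|lborel. \<theta> t \<omega> * opt_proc t \<omega>) - (LINT t:{0..T}|lborel. \<theta> t \<omega> * v t \<omega>)
        + (LINT t:{0..T}|lborel. (v t \<omega> - opt_proc t \<omega>) * (martingale_part T \<omega> - martingale_part t \<omega>)))
    \<le> enn2ereal (path_cost T x0 (\<lambda>t. v t \<omega>))"
proof -
  have T: "0 \<le> T" "T \<in> {0..T}"
    using T_pos by auto
  have "AE \<omega> in M. set_integrable lborel {0..T} (\<lambda>s. Ham_x L (X s \<omega>) (P s \<omega> + \<theta> s \<omega>))"
    using backward T(2) by auto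
  with forward terminal HF_section_square_integrable[OF v T(1)]
    HF_section_square_integrable[OF opt_proc_HF T(1)] HF_section_square_integrable[OF HF(1) T(1)]
    HF_section_square_integrable[OF HF(3) T(1)]
  have "AE \<omega> in M. enn2ereal (path_cost T x0 (\<lambda>t. opt_proc (clamp T t) \<omega>))
      + ereal ((LINT t:{0..T}|lborel. \<theta> (clamp T t) \<omega> * opt_proc (clamp T t) \<omega>)
        - (LINT t:{0..T}|lborel. \<theta> (clamp T t) \<omega> * v (clamp T t) \<omega>)
        + (LINT t:{0..T}|lborel. (v (clamp T t) \<omega> - opt_proc (clamp T t) \<omega>) * (martingale_part T \<omega> - martingale_part t \<omega>)))
      \<le> enn2ereal (path_cost T x0 (\<lambda>t. v (clamp T t) \<omega>))"
    by (elim AE_mp, intro AE_I2 impI) (rule pathwise_comparison_clamped[OF v])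
  moreover have "path_cost T x0 (\<lambda>t. opt_proc (clamp T t) \<omega>) = path_cost T x0 (\<lambda>t. opt_proc t \<omega>)"
    "path_cost T x0 (\<lambda>t. v (clamp T t) \<omega>) = path_cost T x0 (\<lambda>t. v t \<omega>)" for \<omega>
    by (auto intro: path_cost_cong)
  moreover have "(LINT t:{0..T}|lborel. \<theta> (clamp T t) \<omega> * opt_proc (clamp T t) \<omega>) = (LINT t:{0..T}|lborel. \<theta> t \<omega> * opt_proc t \<omega>)"
    "(LINT t:{0..T}|lborel. \<theta> (clamp T t) \<omega> * v (clamp T t) \<omega>) = (LINT t:{0..T}|lborel. \<theta> t \<omega> * v t \<omega>)"
    "(LINT t:{0..T}|lborel. (v (clamp T t) \<omega> - opt_proc (clamp T t) \<omega>) * (martingale_part T \<omega> - martingale_part t \<omega>))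
      = (LINT t:{0..T}|lborel. (v t \<omega> - opt_proc t \<omega>) * (martingale_part T \<omega> - martingale_part t \<omega>))" for \<omega>
    by (auto intro: set_lebesgue_integral_cong)
  ultimately show ?thesis
    by simp
qed

lemma cost_eq_path_cost:
  "cost M T L \<Psi> x0 \<theta> u
    = enn2ereal (\<integral>\<^sup>+\<omega>. path_cost T x0 (\<lambda>t. u t \<omega>) \<partial>M) + ereal (\<integral>\<omega>. (LINT t:{0..T}|lborel. \<theta> t \<omega> * u t \<omega>) \<partial>M)"
  by (simp add: cost_def path_cost_def state_def)

lemma measurable_path_cost_HF:
  assumes "u \<in> HF M W T"
  shows "(\<lambda>\<omega>. path_cost T x0 (\<lambda>t. u t \<omega>)) \<in> borel_measurable M"
proof -
  have "(\<lambda>\<omega>. path_cost T x0 (\<lambda>t. u (clamp T t) \<omega>)) \<in> borel_measurable M"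
    using assms T_pos by (intro measurable_path_cost HF_measurable_clamp) auto
  moreover have "path_cost T x0 (\<lambda>t. u (clamp T t) \<omega>) = path_cost T x0 (\<lambda>t. u t \<omega>)" for \<omega>
    by (rule path_cost_cong) simp
  ultimately show ?thesis by simp
qed

lemma opt_proc_optimal:
  assumes v: "v \<in> HF M W T"
  shows "cost M T L \<Psi> x0 \<theta> opt_proc \<le> cost M T L \<Psi> x0 \<theta> v"
proof -
  define bs bv G where "bs \<omega> = (LINT t:{0..T}|lborel. \<theta> t \<omega> * opt_proc t \<omega>)"
    and "bv \<omega> = (LINT t:{0..T}|lborel. \<theta> t \<omega> * v t \<omega>)"
    and "G \<omega> = (LINT t:{0..T}|lborel. (v t \<omega> - opt_proc t \<omega>) * (martingale_part T \<omega> - martingale_part t \<omega>))"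
    for \<omega>
  have bs: "integrable M bs" and bv: "integrable M bv"
    unfolding bs_def bv_def using HF(1) opt_proc_HF v T_pos by (auto intro: integrable_HF_inner)
  have G: "integrable M G" "expectation G = 0"
    unfolding G_def using martingale_term[OF v] by auto
  have "enn2ereal (\<integral>\<^sup>+\<omega>. path_cost T x0 (\<lambda>t. opt_proc t \<omega>) \<partial>M) + ereal (\<integral>\<omega>. bs \<omega> - bv \<omega> + G \<omega> \<partial>M)
      \<le> enn2ereal (\<integral>\<^sup>+\<omega>. path_cost T x0 (\<lambda>t. v t \<omega>) \<partial>M)"
  proof (rule nn_integral_plus_integral_le)
    show "integrable M (\<lambda>\<omega>. bs \<omega> - bv \<omega> + G \<omega>)"
      using bs bv G(1) by auto
    show "AE \<omega> in M. enn2ereal (path_cost T x0 (\<lambda>t. opt_proc t \<omega>)) + ereal (bs \<omega> - bv \<omega> + G \<omega>)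
        \<le> enn2ereal (path_cost T x0 (\<lambda>t. v t \<omega>))"
      using pathwise_comparison_AE[OF v] by (simp add: bs_def bv_def G_def)
  qed (intro measurable_path_cost_HF opt_proc_HF v)+
  moreover have "(\<integral>\<omega>. bs \<omega> - bv \<omega> + G \<omega> \<partial>M) = expectation bs - expectation bv"
    using bs bv G by simp
  ultimately have "enn2ereal (\<integral>\<^sup>+\<omega>. path_cost T x0 (\<lambda>t. opt_proc t \<omega>) \<partial>M) + ereal (expectation bs - expectation bv)
      \<le> enn2ereal (\<integral>\<^sup>+\<omega>. path_cost T x0 (\<lambda>t. v t \<omega>) \<partial>M)"
    by simp
  then show ?thesis
    unfolding cost_eq_path_cost bs_def[symmetric] bv_def[symmetric]
    by (rule ereal_add_diff_le)
qed

end

theorem proposition3p7: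
  fixes M :: "'a measure" and W :: "real \<Rightarrow> 'a \<Rightarrow> real" and T :: real
    and L :: "real \<Rightarrow> real \<Rightarrow> real" and \<Psi> :: "real \<Rightarrow> real"
    and \<alpha> \<beta> C x0 :: real
    and \<theta> X P Z :: "real \<Rightarrow> 'a \<Rightarrow> real"
  assumes T_pos: "T > 0"
    and complete: "complete_measure M"
    and BM: "brownian_motion M W"
    \<comment> \<open>(A1)\<close>
    and A1_C1: "\<exists>L'. (\<forall>z. ((\<lambda>z. L (fst z) (snd z)) has_derivative blinfun_apply (L' z)) (at z))
                    \<and> continuous_on UNIV L'"
    and A1_nonneg: "\<And>x v. L x v \<ge> 0"
    and A1_convex: "convex_on UNIV (\<lambda>z. L (fst z) (snd z))"
    \<comment> \<open>(A2)\<close>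
    and A2_C1: "\<Psi> C1_differentiable_on UNIV"
    and A2_nonneg: "\<And>x. \<Psi> x \<ge> 0"
    and A2_convex: "convex_on UNIV \<Psi>"
    \<comment> \<open>(A5)\<close>
    and A5: "\<alpha> > 0" "\<beta> \<ge> 0" "\<And>x v. \<alpha> * v\<^sup>2 - \<beta> \<le> L x v"
    \<comment> \<open>(A7)\<close>
    and A7: "C > 0" "\<And>x p. \<bar>Ham_p L x p\<bar> \<le> C * (1 + \<bar>p\<bar>)"
    \<comment> \<open>strict convexity of L in v\<close>
    and strict: "\<And>x u w t. u \<noteq> w \<Longrightarrow> 0 < t \<Longrightarrow> t < 1 \<Longrightarrow>
                   L x (t * u + (1 - t) * w) < t * L x u + (1 - t) * L x w"
    and varpi: "\<theta> \<in> HF M W T"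
    and XPZ: "X \<in> HF M W T" "P \<in> HF M W T" "Z \<in> HF M W T"
    \<comment> \<open>forward equation dX = -H_p(X, P + varpi) dt, X_0 = x0\<close>
    and fwd: "AE \<omega> in M. \<forall>t\<in>{0..T}.
                set_integrable lborel {0..t} (\<lambda>s. Ham_p L (X s \<omega>) (P s \<omega> + \<theta> s \<omega>)) \<and>
                X t \<omega> = x0 - (LINT s:{0..t}|lborel. Ham_p L (X s \<omega>) (P s \<omega> + \<theta> s \<omega>))"
    \<comment> \<open>backward equation dP = H_x(X, P + varpi) dt + Z dW, P_T = Psi'(X_T)\<close>
    and bwd: "\<exists>I. ito_integral M W T Z I \<and>
                (\<forall>t\<in>{0..T}. AE \<omega> in M.
                   set_integrable lborel {0..t} (\<lambda>s. Ham_x L (X s \<omega>) (P s \<omega> + \<theta> s \<omega>)) \<and>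
                   P t \<omega> = P 0 \<omega> + (LINT s:{0..t}|lborel. Ham_x L (X s \<omega>) (P s \<omega> + \<theta> s \<omega>)) + I t \<omega>)"
    and terminal: "AE \<omega> in M. P T \<omega> = deriv \<Psi> (X T \<omega>)"
  shows "(\<lambda>t \<omega>. - Ham_p L (X t \<omega>) (P t \<omega> + \<theta> t \<omega>)) \<in> HF M W T \<and>
         (\<forall>v \<in> HF M W T. cost M T L \<Psi> x0 \<theta> (\<lambda>t \<omega>. - Ham_p L (X t \<omega>) (P t \<omega> + \<theta> t \<omega>))
                           \<le> cost M T L \<Psi> x0 \<theta> v)"
proof -
  obtain L' where "\<forall>z. ((\<lambda>z. L (fst z) (snd z)) has_derivative blinfun_apply (L' z)) (at z)"
    "continuous_on UNIV L'"
    using A1_C1 by blast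
  moreover obtain I where "ito_integral M W T Z I" "\<forall>t\<in>{0..T}. AE \<omega> in M.
      set_integrable lborel {0..t} (\<lambda>s. Ham_x L (X s \<omega>) (P s \<omega> + \<theta> s \<omega>)) \<and>
      P t \<omega> = P 0 \<omega> + (LINT s:{0..t}|lborel. Ham_x L (X s \<omega>) (P s \<omega> + \<theta> s \<omega>)) + I t \<omega>"
    using bwd by blast
  ultimately interpret fbsde_solution L L' \<alpha> \<beta> \<Psi> M W T x0 C \<theta> X P Z I
    using assms by unfold_locales auto
  show ?thesis
    using opt_proc_HF opt_proc_optimal unfolding opt_proc_eq by blast
qed

end
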